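(* $\mathrm{Prim}\,\mathcal Mag_\omega(2)=K\cdot[x_1,x_2]$. The space $\mathrm{Prim}\,\mathcal Mag_\omega(3)$ has dimension $14$ and is generated as a $\Sigma_3$-module by $(x_1,x_2,x_3)_t$, $(x_1,x_2,x_3)_b$ and $[[x_1,x_2],x_3]$, which satisfy $[[x_2,x_1],x_3]=-[[x_1,x_2],x_3]$ and the non-associative Jacobi relation $$[[x_1,x_2],x_3]+[[x_3,x_1],x_2]+[[x_2,x_3],x_1]=(x_1,x_2,x_3)_b-(x_2,x_1,x_3)_b+(x_3,x_1,x_2)_b-(x_1,x_3,x_2)_b+(x_2,x_3,x_1)_b-(x_3,x_2,x_1)_b.$$ Moreover, as a representation of $\Sigma_3$, $\mathrm{Prim}\,\mathcal Mag_\omega(3)\cong 2\,V_{(3)}\oplus5\,V_{(2,1)}\oplus2\,V_{(1,1,1)}$.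
   Context: $K$ is a field of characteristic $0$. A planar rooted tree is reduced if no vertex has exactly one incoming edge. $K\{x_1,x_2,x_3\}_\infty$ is the $K$-vector space with basis the empty tree $1$ and all planar reduced rooted trees with leaves labelled by $x_1,x_2,x_3$; for $k\ge2$, $\vee^k$ grafts $k$ nonempty trees (in order) onto a new root, extended multilinearly, with unit conventions (arguments $1$ are omitted, $\vee^1=\mathrm{id}$, $\vee^k(1,\dots,1)=1$); $a\cdot b:=\vee^2(a,b)$. The tensor square carries the operations componentwise ($\vee^k(a_1\otimes b_1,\dots)=\vee^k(a_1,\dots)\otimes\vee^k(b_1,\dots)$), and the co-addition $\Delta_a$ is the unique unital homomorphism with $\Delta_a(x_i)=x_i\otimes1+1\otimes x_i$; $f$ is primitive if $\Delta_a(f)=f\otimes1+1\otimes f$. $\mathrm{Prim}\,\mathcal Mag_\omega(n)$ is the space of primitive elements multilinear of degree $n$ in $x_1,\dots,x_n$, with $\Sigma_n$ acting by permuting variables. Notation: $[a,b]=a\cdot b-b\cdot a$, $(a,b,c)_b=(a\cdot b)\cdot c-a\cdot(b\cdot c)$, $(a,b,c)_t=(a\cdot b)\cdot c-\vee^3(a,b,c)$. $V_\lambda$ denotes the irreducible $\Sigma_3$-module for the partition $\lambda$ ($V_{(3)}$ trivial, $V_{(2,1)}$ two-dimensional, $V_{(1,1,1)}$ sign). *)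

theory Defs
  imports Complex_Main "HOL-Combinatorics.Permutations" "HOL-Library.Function_Algebras"
begin

text \<open>One is the empty tree 1; Leaf i is the one-leaf tree labelled x_i;
  Node ts is the grafting of the trees ts onto a new root.\<close>
datatype mtree = One | Leaf nat | Node "mtree list"

text \<open>Nonempty planar reduced rooted trees (no vertex with exactly one incoming edge).\<close>
fun proper :: "mtree \<Rightarrow> bool" where
  "proper One = False"
| "proper (Leaf i) = True"
| "proper (Node ts) = (2 \<le> length ts \<and> (\<forall>t\<in>set ts. proper t))"

fun leaves :: "mtree \<Rightarrow> nat list" where
  "leaves One = []"
| "leaves (Leaf i) = [i]"
| "leaves (Node ts) = concat (map leaves ts)"

fun relabel :: "(nat \<Rightarrow> nat) \<Rightarrow> mtree \<Rightarrow> mtree" where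
  "relabel p One = One"
| "relabel p (Leaf i) = Leaf (p i)"
| "relabel p (Node ts) = Node (map (relabel p) ts)"

definition graft :: "mtree list \<Rightarrow> mtree" where
  "graft ts = (let ts' = filter (\<lambda>t. t \<noteq> One) ts in
     if ts' = [] then One else if length ts' = 1 then hd ts' else Node ts')"

text \<open>Vectors are (finitely supported) coefficient functions on trees; the tensor
  square is represented by coefficient functions on pairs of trees.\<close>
type_synonym 'k vec = "mtree \<Rightarrow> 'k"
type_synonym 'k vec2 = "mtree \<times> mtree \<Rightarrow> 'k"

definition supp :: "('a \<Rightarrow> 'k::zero) \<Rightarrow> 'a set" where
  "supp f = {x. f x \<noteq> 0}"

definition sc :: "'k::field \<Rightarrow> 'k vec \<Rightarrow> 'k vec" where
  "sc c f = (\<lambda>t. c * f t)"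

definition X :: "nat \<Rightarrow> 'k::field vec" where
  "X i = (\<lambda>t. if t = Leaf i then 1 else 0)"

text \<open>Multilinear extension of the grafting operations on K{x} and on its tensor square
  (componentwise).\<close>
definition mgraft :: "'k::field vec list \<Rightarrow> 'k vec" where
  "mgraft vs = (\<lambda>u. \<Sum>as\<in>listset (map supp vs).
      if graft as = u then prod_list (map2 (\<lambda>w a. w a) vs as) else 0)"

definition mgraft2 :: "'k::field vec2 list \<Rightarrow> 'k vec2" where
  "mgraft2 vs = (\<lambda>(u, v). \<Sum>ps\<in>listset (map supp vs).
      if graft (map fst ps) = u \<and> graft (map snd ps) = v
      then prod_list (map2 (\<lambda>w p. w p) vs ps) else 0)"

definition mul :: "'k::field vec \<Rightarrow> 'k vec \<Rightarrow> 'k vec" where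
  "mul a b = mgraft [a, b]"

definition vee3 :: "'k::field vec \<Rightarrow> 'k vec \<Rightarrow> 'k vec \<Rightarrow> 'k vec" where
  "vee3 a b c = mgraft [a, b, c]"

definition bracket :: "'k::field vec \<Rightarrow> 'k vec \<Rightarrow> 'k vec" where
  "bracket a b = mul a b - mul b a"

definition assoc_b :: "'k::field vec \<Rightarrow> 'k vec \<Rightarrow> 'k vec \<Rightarrow> 'k vec" where
  "assoc_b a b c = mul (mul a b) c - mul a (mul b c)"

definition assoc_t :: "'k::field vec \<Rightarrow> 'k vec \<Rightarrow> 'k vec \<Rightarrow> 'k vec" where
  "assoc_t a b c = mul (mul a b) c - vee3 a b c"

text \<open>Co-addition on basis trees: the unital homomorphism with
  Delta(x_i) = x_i \<otimes> 1 + 1 \<otimes> x_i, i.e. Delta(1) = 1 \<otimes> 1 and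
  Delta(\<or>^k(t_1,...,t_k)) = \<or>^k(Delta t_1, ..., Delta t_k).\<close>
fun delta :: "mtree \<Rightarrow> 'k::field vec2" where
  "delta One = (\<lambda>p. if p = (One, One) then 1 else 0)"
| "delta (Leaf i) = (\<lambda>p. if p = (Leaf i, One) \<or> p = (One, Leaf i) then 1 else 0)"
| "delta (Node ts) = mgraft2 (map delta ts)"

definition Delta :: "'k::field vec \<Rightarrow> 'k vec2" where
  "Delta f = (\<lambda>p. \<Sum>t\<in>supp f. f t * delta t p)"

definition ten_one :: "'k::field vec \<Rightarrow> 'k vec2" where
  "ten_one f = (\<lambda>(u, v). if v = One then f u else 0)"

definition one_ten :: "'k::field vec \<Rightarrow> 'k vec2" where
  "one_ten f = (\<lambda>(u, v). if u = One then f v else 0)"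

definition primitive :: "'k::field vec \<Rightarrow> bool" where
  "primitive f \<longleftrightarrow> Delta f = ten_one f + one_ten f"

definition Prim :: "nat \<Rightarrow> 'k::field vec set" where
  "Prim n = {f. finite (supp f) \<and>
      (\<forall>t\<in>supp f. proper t \<and> mset (leaves t) = mset [1..<Suc n]) \<and> primitive f}"

text \<open>Action of Sigma_n by permuting variables: sigma . x_i = x_(sigma i).\<close>
definition act :: "(nat \<Rightarrow> nat) \<Rightarrow> 'k::field vec \<Rightarrow> 'k vec" where
  "act \<sigma> f = (\<lambda>t. f (relabel (inv \<sigma>) t))"

type_synonym 'k rep = "(nat \<Rightarrow> 'k) set \<times> ((nat \<Rightarrow> nat) \<Rightarrow> (nat \<Rightarrow> 'k) \<Rightarrow> (nat \<Rightarrow> 'k))"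

text \<open>V_(3): the trivial representation on K.\<close>
definition V_triv :: "'k::field rep" where
  "V_triv = ({v. \<forall>i. i \<noteq> 0 \<longrightarrow> v i = 0}, \<lambda>\<sigma> v. v)"

text \<open>V_(1,1,1): the sign representation on K.\<close>
definition V_sign :: "'k::field rep" where
  "V_sign = ({v. \<forall>i. i \<noteq> 0 \<longrightarrow> v i = 0}, \<lambda>\<sigma> v. (\<lambda>i. of_int (sign \<sigma>) * v i))"

text \<open>V_(2,1): the standard representation {v \<in> K^3 | v_1+v_2+v_3 = 0}, with
  sigma . e_i = e_(sigma i).\<close>
definition V_std :: "'k::field rep" where
  "V_std = ({v. (\<forall>i. i \<notin> {1,2,3} \<longrightarrow> v i = 0) \<and> v 1 + v 2 + v 3 = 0},
            \<lambda>\<sigma> v. v \<circ> inv \<sigma>)"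

definition dsum_carrier :: "'k::field rep list \<Rightarrow> (nat \<Rightarrow> nat \<Rightarrow> 'k) set" where
  "dsum_carrier Rs = {w. (\<forall>j<length Rs. w j \<in> fst (Rs ! j)) \<and> (\<forall>j\<ge>length Rs. w j = 0)}"

definition dsum_act :: "'k::field rep list \<Rightarrow> (nat \<Rightarrow> nat) \<Rightarrow> (nat \<Rightarrow> nat \<Rightarrow> 'k) \<Rightarrow> (nat \<Rightarrow> nat \<Rightarrow> 'k)" where
  "dsum_act Rs \<sigma> w = (\<lambda>j. if j < length Rs then snd (Rs ! j) \<sigma> (w j) else 0)"

definition sym3_iso :: "'k::field vec set \<Rightarrow> 'k rep list \<Rightarrow> bool" where
  "sym3_iso P Rs \<longleftrightarrow> (\<exists>\<phi>.
      (\<forall>f\<in>P. \<forall>g\<in>P. \<phi> (f + g) = \<phi> f + \<phi> g) \<and>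
      (\<forall>c. \<forall>f\<in>P. \<phi> (sc c f) = (\<lambda>j i. c * \<phi> f j i)) \<and>
      bij_betw \<phi> P (dsum_carrier Rs) \<and>
      (\<forall>\<sigma>. \<sigma> permutes {1,2,3} \<longrightarrow> (\<forall>f\<in>P. \<phi> (act \<sigma> f) = dsum_act Rs \<sigma> (\<phi> f))))"

end

(*
  Forgetting the bracketing sends a tree to its word of leaves. For a multilinear tree t with
  three leaves, Delta t is t \<otimes> 1 + 1 \<otimes> t plus the six splittings x \<otimes> yz, yz \<otimes> x of its
  leaf word, and these do not depend on the shape of t. Hence a combination of the 18 such trees
  is primitive iff its image in the free associative algebra is a Lie element, i.e. iff the
  coefficient of the word abc depends only on the middle letter b, through a vector with
  coordinate sum zero: the Lie part is a copy of V(2,1). The kernel of the forgetful map is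
  spanned by the trees ((ab)c) - (a(bc)) and ((ab)c) - (abc), the orbits of the two
  associators, and is two copies of K[Sigma_3] = V(3) + 2 V(2,1) + V(1,1,1); the Lie part is
  reached from [[x1,x2],x3]. This gives the basis of size 12 + 2 and the decomposition.
  In degree 2 the same computation leaves only x1 x2 - x2 x1.
*)

theory Submission
  imports Defs
begin

(* keeps the letters 1, 2, 3 as numerals instead of Suc 0, ... *)
declare One_nat_def [simp del]

section \<open>Trees with two and three leaves\<close>

datatype shape3 = LComb | RComb | Corolla

lemma UNIV_shape3: "UNIV = {LComb, RComb, Corolla}"
  using shape3.exhaust by auto

instance shape3 :: finite
  by standard (simp add: UNIV_shape3)

abbreviation cherry :: "nat \<Rightarrow> nat \<Rightarrow> mtree" where
  "cherry a b \<equiv> Node [Leaf a, Leaf b]"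

fun tree3 :: "shape3 \<Rightarrow> nat \<Rightarrow> nat \<Rightarrow> nat \<Rightarrow> mtree" where
  "tree3 LComb a b c = Node [cherry a b, Leaf c]"
| "tree3 RComb a b c = Node [Leaf a, cherry b c]"
| "tree3 Corolla a b c = Node [Leaf a, Leaf b, Leaf c]"

lemma tree3_inject [simp]:
  "tree3 s a b c = tree3 s' a' b' c' \<longleftrightarrow> s = s' \<and> a = a' \<and> b = b' \<and> c = c'"
  by (cases s; cases s') auto

lemma tree3_neq_One [simp]: "tree3 s a b c \<noteq> One"
  by (cases s) auto

lemma leaves_tree3 [simp]: "leaves (tree3 s a b c) = [a, b, c]"
  by (cases s) auto

lemma proper_tree3 [simp]: "proper (tree3 s a b c)"
  by (cases s) auto

lemma relabel_tree3 [simp]: "relabel p (tree3 s a b c) = tree3 s (p a) (p b) (p c)"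
  by (cases s) auto

declare tree3.simps [simp del]

definition words3 :: "(nat \<times> nat \<times> nat) set" where
  "words3 = {(a, b, c). distinct [a, b, c] \<and> {a, b, c} = {1, 2, 3}}"

lemma words3_eq: "words3 = {(1,2,3), (1,3,2), (2,1,3), (2,3,1), (3,1,2), (3,2,1)}"
proof (intro equalityI subsetI)
  fix w assume "w \<in> words3"
  then obtain a b c where w: "w = (a, b, c)"
    and d: "distinct [a, b, c]" and s: "{a, b, c} = {1, 2, 3::nat}"
    unfolding words3_def by blast
  from s have "a \<in> {1, 2, 3}" "b \<in> {1, 2, 3}" "c \<in> {1, 2, 3}" by blast+
  then show "w \<in> {(1,2,3), (1,3,2), (2,1,3), (2,3,1), (3,1,2), (3,2,1)}"
    using d unfolding w by (elim insertE emptyE) simp_all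
qed (auto simp: words3_def)

lemma words3_permute:
  assumes "\<sigma> permutes {1, 2, 3}"
  shows "(\<sigma> a, \<sigma> b, \<sigma> c) \<in> words3 \<longleftrightarrow> (a, b, c) \<in> words3"
proof -
  have "inj \<sigma>" using assms by (rule permutes_inj)
  moreover have "\<sigma> ` {a, b, c} = {1, 2, 3} \<longleftrightarrow> {a, b, c} = {1, 2, 3}"
    using permutes_image[OF assms] assms permutes_inj inj_image_eq_iff by metis
  ultimately show ?thesis by (auto simp: words3_def inj_eq)
qed

definition trees3 :: "mtree set" where
  "trees3 = {tree3 s a b c | s a b c. (a, b, c) \<in> words3}"

lemma tree3_in_trees3 [simp]: "(a, b, c) \<in> words3 \<Longrightarrow> tree3 s a b c \<in> trees3"
  by (auto simp: trees3_def)

lemma trees3_image: "trees3 = (\<lambda>(s, a, b, c). tree3 s a b c) ` (UNIV \<times> words3)"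
  by (force simp: trees3_def)

lemma finite_words3 [simp]: "finite words3"
  by (simp add: words3_eq)

lemma finite_trees3 [simp]: "finite trees3"
  by (simp add: trees3_image)

lemma length_leaves_pos: "proper t \<Longrightarrow> 0 < length (leaves t)"
proof (induction t)
  case (Node ts)
  then obtain t1 where "t1 \<in> set ts" by (cases ts) auto
  with Node have "0 < length (leaves t1)" by simp
  also have "\<dots> \<le> (\<Sum>t\<leftarrow>ts. length (leaves t))"
    using \<open>t1 \<in> set ts\<close> by (intro member_le_sum_list) auto
  finally show ?case by (simp add: length_concat o_def)
qed auto

lemma length_children_le_leaves:
  assumes "proper (Node ts)"
  shows "length ts \<le> length (leaves (Node ts))"
proof -
  have "length ts = (\<Sum>t\<leftarrow>ts. 1::nat)" by (simp add: sum_list_triv)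
  also have "\<dots> \<le> (\<Sum>t\<leftarrow>ts. length (leaves t))"
    using assms length_leaves_pos by (intro sum_list_mono) (simp add: Suc_le_eq One_nat_def)
  finally show ?thesis by (simp add: length_concat o_def)
qed

lemma proper_one_leaf: "proper t \<Longrightarrow> length (leaves t) = 1 \<Longrightarrow> \<exists>a. t = Leaf a"
  using length_children_le_leaves by (cases t) fastforce+

lemma proper_two_leaves:
  assumes "proper t" "length (leaves t) = 2"
  shows "\<exists>a b. t = cherry a b"
proof (cases t)
  case (Node ts)
  with assms length_children_le_leaves[of ts] have "length ts = 2" by auto
  then obtain x y where ts: "ts = [x, y]" by (auto simp: length_Suc_conv numeral_2_eq_2)
  with Node assms have "proper x" "proper y"
    and "length (leaves x) + length (leaves y) = 2" by auto
  with length_leaves_pos[of x] length_leaves_pos[of y]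
  have "length (leaves x) = 1" "length (leaves y) = 1" by linarith+
  with Node ts proper_one_leaf \<open>proper x\<close> \<open>proper y\<close> show ?thesis by blast
qed (use assms in auto)

lemma proper_three_leaves:
  assumes "proper t" "length (leaves t) = 3"
  shows "\<exists>s a b c. t = tree3 s a b c"
proof (cases t)
  case (Node ts)
  with assms length_children_le_leaves[of ts] have "length ts = 2 \<or> length ts = 3" by auto
  then show ?thesis
  proof
    assume "length ts = 2"
    then obtain x y where ts: "ts = [x, y]" by (auto simp: length_Suc_conv numeral_2_eq_2)
    with Node assms have "proper x" "proper y"
      and "length (leaves x) + length (leaves y) = 3" by auto
    with length_leaves_pos[of x] length_leaves_pos[of y]
    have "length (leaves x) = 1 \<and> length (leaves y) = 2
        \<or> length (leaves x) = 2 \<and> length (leaves y) = 1"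
      by linarith
    with \<open>proper x\<close> \<open>proper y\<close> Node ts proper_one_leaf proper_two_leaves show ?thesis
      by (metis tree3.simps(1,2))
  next
    assume "length ts = 3"
    then obtain x y z where ts: "ts = [x, y, z]" by (auto simp: length_Suc_conv numeral_3_eq_3)
    with Node assms have "proper x" "proper y" "proper z"
      and "length (leaves x) + length (leaves y) + length (leaves z) = 3" by auto
    with length_leaves_pos[of x] length_leaves_pos[of y] length_leaves_pos[of z]
    have "length (leaves x) = 1" "length (leaves y) = 1" "length (leaves z) = 1" by linarith+
    with Node ts proper_one_leaf \<open>proper x\<close> \<open>proper y\<close> \<open>proper z\<close>
    show ?thesis by (metis tree3.simps(3))
  qed
qed (use assms in auto)

lemma mset_eq_123_iff: "mset [a, b, c] = mset [1, 2, 3::nat] \<longleftrightarrow> (a, b, c) \<in> words3"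
proof
  assume m: "mset [a, b, c] = mset [1, 2, 3::nat]"
  then show "(a, b, c) \<in> words3"
    using mset_eq_imp_distinct_iff[OF m] mset_eq_setD[OF m] by (simp add: words3_def)
next
  assume "(a, b, c) \<in> words3"
  then show "mset [a, b, c] = mset [1, 2, 3::nat]"
    using set_eq_iff_mset_eq_distinct[of "[a, b, c]" "[1, 2, 3]"] by (simp add: words3_def)
qed

lemma multilinear3_iff_trees3:
  "proper t \<and> mset (leaves t) = mset [1..<Suc 3] \<longleftrightarrow> t \<in> trees3"
proof -
  have "proper t \<and> mset (leaves t) = mset [1, 2, 3] \<longleftrightarrow> t \<in> trees3"
  proof
    assume t: "proper t \<and> mset (leaves t) = mset [1, 2, 3]"
    then have m: "mset (leaves t) = mset [1, 2, 3]" by simp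
    then have "length (leaves t) = 3" by (metis size_mset length_Cons list.size(3) numeral_3_eq_3)
    with t obtain s a b c where "t = tree3 s a b c" using proper_three_leaves by blast
    with m show "t \<in> trees3" unfolding trees3_def using mset_eq_123_iff by auto
  next
    assume "t \<in> trees3"
    then obtain s a b c where "t = tree3 s a b c" "mset [a, b, c] = mset [1, 2, 3::nat]"
      unfolding trees3_def using mset_eq_123_iff by blast
    then show "proper t \<and> mset (leaves t) = mset [1, 2, 3]" by simp
  qed
  moreover have "[1..<Suc 3] = [1, 2, 3::nat]" by (simp add: upt_rec)
  ultimately show ?thesis by simp
qed

lemma multilinear2_iff:
  "proper t \<and> mset (leaves t) = mset [1..<Suc 2] \<longleftrightarrow> t \<in> {cherry 1 2, cherry 2 1}"
proof -
  have "proper t \<and> mset (leaves t) = mset [1, 2] \<longleftrightarrow> t \<in> {cherry 1 2, cherry 2 1}"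
  proof
    assume t: "proper t \<and> mset (leaves t) = mset [1, 2]"
    then have m: "mset (leaves t) = mset [1, 2]" by simp
    then have "length (leaves t) = 2" by (metis size_mset length_Cons list.size(3) numeral_2_eq_2)
    with t obtain a b where t: "t = cherry a b" using proper_two_leaves by blast
    with m have "set [a, b] = {1, 2}" "distinct [a, b]"
      using mset_eq_setD[of "[a, b]" "[1, 2]"] mset_eq_imp_distinct_iff[of "[a, b]" "[1, 2::nat]"]
      by auto
    then show "t \<in> {cherry 1 2, cherry 2 1}" unfolding t by (auto simp: doubleton_eq_iff)
  qed auto
  moreover have "[1..<Suc 2] = [1, 2::nat]" by (simp add: upt_rec)
  ultimately show ?thesis by simp
qed

definition indic :: "'a set \<Rightarrow> 'a \<Rightarrow> 'k::field" where
  "indic S = (\<lambda>x. if x \<in> S then 1 else 0)"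

abbreviation basis_vec :: "mtree \<Rightarrow> 'k::field vec" where
  "basis_vec t \<equiv> indic {t}"

lemma supp_indic [simp]: "supp (indic S :: 'a \<Rightarrow> 'k::field) = S"
  by (auto simp: supp_def indic_def)

lemma X_eq_basis_vec: "X i = basis_vec (Leaf i)"
  by (simp add: X_def indic_def fun_eq_iff)

lemma finite_listset: "\<forall>S\<in>set Ss. finite S \<Longrightarrow> finite (listset Ss)"
proof (induction Ss)
  case (Cons S Ss)
  have "set_Cons S (listset Ss) = (\<lambda>(x, xs). x # xs) ` (S \<times> listset Ss)"
    by (auto simp: set_Cons_def)
  with Cons show ?case by simp
qed simp

lemma prod_list_indic_listset:
  "as \<in> listset Ss \<Longrightarrow> prod_list (map2 (\<lambda>w a. w a) (map indic Ss) as) = (1::'k::field)"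
proof (induction Ss arbitrary: as)
  case (Cons S Ss)
  then obtain x xs where "as = x # xs" "x \<in> S" "xs \<in> listset Ss" by (auto simp: set_Cons_def)
  with Cons.IH show ?case by (simp add: indic_def)
qed simp

lemma set_Cons_insert [simp]: "set_Cons (insert a A) XS = Cons a ` XS \<union> set_Cons A XS"
  by (auto simp: set_Cons_def)

lemma set_Cons_empty [simp]: "set_Cons {} XS = {}"
  by (simp add: set_Cons_def)

lemma sum_indicator_inj:
  assumes "finite A" "inj_on h A"
  shows "(\<Sum>a\<in>A. if h a = y then 1 else 0) = (indic (h ` A) y :: 'k::field)"
proof (cases "y \<in> h ` A")
  case True
  then obtain a0 where a0: "a0 \<in> A" "y = h a0" by blast
  with assms have "(\<Sum>a\<in>A. if h a = y then 1 else (0::'k))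
      = (\<Sum>a\<in>A. if a = a0 then 1 else 0)"
    by (intro sum.cong) (auto simp: inj_on_def)
  with a0 assms(1) True show ?thesis by (simp add: indic_def)
qed (auto simp: indic_def intro!: sum.neutral)

lemma mgraft_basis_vec: "mgraft (map basis_vec ts) = (basis_vec (graft ts) :: 'k::field vec)"
proof -
  have "listset (map supp (map basis_vec ts :: 'k vec list)) = {ts}"
    by (induction ts) (auto simp: set_Cons_def)
  moreover have "prod_list (map2 (\<lambda>w a. w a) (map basis_vec ts :: 'k vec list) ts) = 1"
    by (induction ts) (auto simp: indic_def)
  ultimately show ?thesis by (auto simp: mgraft_def indic_def fun_eq_iff)
qed

lemma mul_basis_vec:
  "mul (basis_vec s) (basis_vec t) = (basis_vec (graft [s, t]) :: 'k::field vec)"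
  using mgraft_basis_vec[of "[s, t]"] by (simp add: mul_def)

lemma vee3_basis_vec:
  "vee3 (basis_vec s) (basis_vec t) (basis_vec u) = (basis_vec (graft [s, t, u]) :: 'k::field vec)"
  using mgraft_basis_vec[of "[s, t, u]"] by (simp add: vee3_def)

lemma mul_eq_double_sum:
  fixes f g :: "'k::field vec"
  assumes "finite S" "finite T" "supp f \<subseteq> S" "supp g \<subseteq> T"
  shows "mul f g u = (\<Sum>x\<in>S. \<Sum>y\<in>T. if graft [x, y] = u then f x * g y else 0)"
proof -
  have pairs: "listset (map supp [f, g]) = (\<lambda>(x, y). [x, y]) ` (supp f \<times> supp g)"
    by (auto simp: set_Cons_def)
  have "mul f g u = (\<Sum>(x, y)\<in>supp f \<times> supp g. if graft [x, y] = u then f x * g y else 0)"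
    unfolding mul_def mgraft_def pairs
    by (subst sum.reindex) (auto simp: inj_on_def intro!: sum.cong)
  also have "\<dots> = (\<Sum>x\<in>supp f. \<Sum>y\<in>supp g. if graft [x, y] = u then f x * g y else 0)"
    by (simp add: sum.cartesian_product)
  also have "\<dots> = (\<Sum>x\<in>S. \<Sum>y\<in>supp g. if graft [x, y] = u then f x * g y else 0)"
    using assms by (intro sum.mono_neutral_left)
      (auto simp: supp_def intro!: sum.neutral split: if_split_asm)
  also have "\<dots> = (\<Sum>x\<in>S. \<Sum>y\<in>T. if graft [x, y] = u then f x * g y else 0)"
    using assms by (intro sum.cong refl sum.mono_neutral_left) (auto simp: supp_def)
  finally show ?thesis .
qed

lemma if_diff_zero:
  "(if P then a - b else 0) = (if P then a else 0) - (if P then b else (0::'a::group_add))"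
  by simp

lemma mul_diff_left:
  fixes f f' g :: "'k::field vec"
  assumes "finite (supp f)" "finite (supp f')" "finite (supp g)"
  shows "mul (f - f') g = mul f g - mul f' g"
proof
  fix u
  let ?S = "supp f \<union> supp f'" and ?T = "supp g"
  let ?M = "\<lambda>h. \<Sum>x\<in>?S. \<Sum>y\<in>?T. if graft [x, y] = u then h x * g y else 0"
  have "supp (f - f') \<subseteq> ?S" by (auto simp: supp_def)
  with assms have "mul (f - f') g u = ?M (f - f')" by (intro mul_eq_double_sum) auto
  also have "\<dots> = ?M f - ?M f'"
    by (simp only: minus_apply left_diff_distrib if_diff_zero sum_subtractf)
  also have "\<dots> = (mul f g - mul f' g) u"
    using assms by (simp add: mul_eq_double_sum[where S = ?S and T = ?T])
  finally show "mul (f - f') g u = (mul f g - mul f' g) u" .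
qed

lemma mul_diff_right:
  fixes f f' g :: "'k::field vec"
  assumes "finite (supp f)" "finite (supp f')" "finite (supp g)"
  shows "mul g (f - f') = mul g f - mul g f'"
proof
  fix u
  let ?S = "supp f \<union> supp f'" and ?T = "supp g"
  let ?M = "\<lambda>h. \<Sum>x\<in>?T. \<Sum>y\<in>?S. if graft [x, y] = u then g x * h y else 0"
  have "supp (f - f') \<subseteq> ?S" by (auto simp: supp_def)
  with assms have "mul g (f - f') u = ?M (f - f')" by (intro mul_eq_double_sum) auto
  also have "\<dots> = ?M f - ?M f'"
    by (simp only: minus_apply right_diff_distrib if_diff_zero sum_subtractf)
  also have "\<dots> = (mul g f - mul g f') u"
    using assms by (simp add: mul_eq_double_sum[where S = ?T and T = ?S])
  finally show "mul g (f - f') u = (mul g f - mul g f') u" .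
qed

lemma bracket_X:
  "bracket (X a) (X b) = (basis_vec (cherry a b) - basis_vec (cherry b a) :: 'k::field vec)"
  by (simp add: bracket_def X_eq_basis_vec mul_basis_vec graft_def)

lemma bracket_bracket_X:
  "bracket (bracket (X a) (X b)) (X c) =
    (basis_vec (tree3 LComb a b c) - basis_vec (tree3 LComb b a c)
     - basis_vec (tree3 RComb c a b) + basis_vec (tree3 RComb c b a) :: 'k::field vec)"
proof -
  have fin: "finite (supp (basis_vec t :: 'k vec))" for t by simp
  show ?thesis
    unfolding bracket_X unfolding bracket_def X_eq_basis_vec
    by (simp only: mul_diff_left[OF fin fin fin] mul_diff_right[OF fin fin fin] mul_basis_vec)
      (simp add: graft_def tree3.simps)
qed

lemma assoc_b_X:
  "assoc_b (X a) (X b) (X c) =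
    (basis_vec (tree3 LComb a b c) - basis_vec (tree3 RComb a b c) :: 'k::field vec)"
  by (simp add: assoc_b_def X_eq_basis_vec mul_basis_vec graft_def tree3.simps)

lemma assoc_t_X:
  "assoc_t (X a) (X b) (X c) =
    (basis_vec (tree3 LComb a b c) - basis_vec (tree3 Corolla a b c) :: 'k::field vec)"
  by (simp add: assoc_t_def X_eq_basis_vec mul_basis_vec vee3_basis_vec graft_def tree3.simps)

lemma bracket_bracket_X_antisym:
  "bracket (bracket (X b) (X a)) (X c) = - (bracket (bracket (X a) (X b)) (X c) :: 'k::field vec)"
  by (simp add: bracket_bracket_X algebra_simps)

lemma nonassociative_jacobi:
  "(bracket (bracket (X a) (X b)) (X c) + bracket (bracket (X c) (X a)) (X b)
      + bracket (bracket (X b) (X c)) (X a) :: 'k::field vec)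
    = assoc_b (X a) (X b) (X c) - assoc_b (X b) (X a) (X c) + assoc_b (X c) (X a) (X b)
      - assoc_b (X a) (X c) (X b) + assoc_b (X b) (X c) (X a) - assoc_b (X c) (X b) (X a)"
  by (simp add: bracket_bracket_X assoc_b_X algebra_simps)

lemma relabel_comp: "relabel p (relabel q t) = relabel (p \<circ> q) t"
  by (induction t) auto

lemma relabel_id: "relabel id t = t"
  by (induction t) (auto simp: map_idI)

lemma act_basis_vec:
  assumes "bij \<sigma>"
  shows "act \<sigma> (basis_vec t) = (basis_vec (relabel \<sigma> t) :: 'k::field vec)"
proof -
  have "relabel (inv \<sigma>) u = t \<longleftrightarrow> u = relabel \<sigma> t" for u
    using relabel_comp[of \<sigma> "inv \<sigma>"] relabel_comp[of "inv \<sigma>" \<sigma>] relabel_id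
      bij_is_surj[OF assms] bij_is_inj[OF assms] surj_iff inj_iff by metis
  then show ?thesis by (simp add: act_def indic_def fun_eq_iff)
qed

lemma act_diff [simp]: "act \<sigma> (f - g) = act \<sigma> f - act \<sigma> g"
  by (simp add: act_def fun_eq_iff)

section \<open>The coproduct on trees with three leaves\<close>

definition graft_pair :: "(mtree \<times> mtree) list \<Rightarrow> mtree \<times> mtree" where
  "graft_pair ps = (graft (map fst ps), graft (map snd ps))"

lemma mgraft2_indic:
  assumes "\<forall>S\<in>set Ss. finite S" "inj_on graft_pair (listset Ss)"
  shows "mgraft2 (map indic Ss) = (indic (graft_pair ` listset Ss) :: 'k::field vec2)"
proof
  fix p :: "mtree \<times> mtree"
  have "mgraft2 (map indic Ss) p = (\<Sum>ps\<in>listset Ss. if graft_pair ps = p then (1::'k) else 0)"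
    unfolding mgraft2_def
    by (auto simp: o_def graft_pair_def prod_list_indic_listset split: prod.split intro!: sum.cong)
  also have "\<dots> = indic (graft_pair ` listset Ss) p"
    using assms finite_listset by (intro sum_indicator_inj) auto
  finally show "mgraft2 (map indic Ss) p = (indic (graft_pair ` listset Ss) :: 'k vec2) p" .
qed

lemma delta_Leaf: "delta (Leaf i) = indic {(Leaf i, One), (One, Leaf i)}"
  by (auto simp: indic_def)

lemma delta_cherry:
  assumes "a \<noteq> b"
  shows "(delta (cherry a b) :: 'k::field vec2) =
    indic {(cherry a b, One), (Leaf a, Leaf b), (Leaf b, Leaf a), (One, cherry a b)}"
proof -
  let ?Ss = "[{(Leaf a, One), (One, Leaf a)}, {(Leaf b, One), (One, Leaf b)}]"
  have "delta (cherry a b) = mgraft2 (map indic ?Ss)"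
    by (simp only: delta.simps(3) list.map delta_Leaf)
  also have "\<dots> = indic (graft_pair ` listset ?Ss)"
    using assms
    by (intro mgraft2_indic) (auto simp: inj_on_def graft_pair_def graft_def)
  also have "graft_pair ` listset ?Ss =
      {(cherry a b, One), (Leaf a, Leaf b), (Leaf b, Leaf a), (One, cherry a b)}"
    by (auto simp: graft_pair_def graft_def)
  finally show ?thesis .
qed

definition splittings :: "nat \<Rightarrow> nat \<Rightarrow> nat \<Rightarrow> (mtree \<times> mtree) set" where
  "splittings a b c = {(Leaf a, cherry b c), (Leaf b, cherry a c), (Leaf c, cherry a b),
     (cherry b c, Leaf a), (cherry a c, Leaf b), (cherry a b, Leaf c)}"

lemma delta_tree3:
  assumes "distinct [a, b, c]"
  shows "delta (tree3 s a b c) =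
    indic ({(tree3 s a b c, One), (One, tree3 s a b c)} \<union> splittings a b c)"
proof (cases s)
  case LComb
  let ?Ss = "[{(cherry a b, One), (Leaf a, Leaf b), (Leaf b, Leaf a), (One, cherry a b)},
              {(Leaf c, One), (One, Leaf c)}]"
  have "delta (tree3 s a b c) = mgraft2 (map indic ?Ss)"
    using assms unfolding LComb tree3.simps
    by (subst delta.simps(3)) (simp add: delta_cherry delta_Leaf del: delta.simps)
  also have "\<dots> = indic (graft_pair ` listset ?Ss)"
    using assms
    by (intro mgraft2_indic) (auto simp: inj_on_def graft_pair_def graft_def)
  also have "graft_pair ` listset ?Ss =
      {(tree3 s a b c, One), (One, tree3 s a b c)} \<union> splittings a b c"
    using assms LComb by 
      (auto simp: graft_pair_def graft_def splittings_def tree3.simps)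
  finally show ?thesis .
next
  case RComb
  let ?Ss = "[{(Leaf a, One), (One, Leaf a)},
              {(cherry b c, One), (Leaf b, Leaf c), (Leaf c, Leaf b), (One, cherry b c)}]"
  have "delta (tree3 s a b c) = mgraft2 (map indic ?Ss)"
    using assms unfolding RComb tree3.simps
    by (subst delta.simps(3)) (simp add: delta_cherry delta_Leaf del: delta.simps)
  also have "\<dots> = indic (graft_pair ` listset ?Ss)"
    using assms
    by (intro mgraft2_indic) (auto simp: inj_on_def graft_pair_def graft_def)
  also have "graft_pair ` listset ?Ss =
      {(tree3 s a b c, One), (One, tree3 s a b c)} \<union> splittings a b c"
    using assms RComb by 
      (auto simp: graft_pair_def graft_def splittings_def tree3.simps)
  finally show ?thesis .
next
  case Corolla
  let ?Ss = "[{(Leaf a, One), (One, Leaf a)}, {(Leaf b, One), (One, Leaf b)},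
              {(Leaf c, One), (One, Leaf c)}]"
  have "delta (tree3 s a b c) = mgraft2 (map indic ?Ss)"
    using Corolla by (simp add: delta_Leaf tree3.simps del: delta.simps(1, 2))
  also have "\<dots> = indic (graft_pair ` listset ?Ss)"
    using assms
    by (intro mgraft2_indic) (auto simp: inj_on_def graft_pair_def graft_def)
  also have "graft_pair ` listset ?Ss =
      {(tree3 s a b c, One), (One, tree3 s a b c)} \<union> splittings a b c"
    using assms Corolla by 
      (auto simp: graft_pair_def graft_def splittings_def tree3.simps)
  finally show ?thesis .
qed

text \<open>The coefficient of the word abc in the image of f in the free associative algebra.\<close>

definition word_coeff :: "'k::field vec \<Rightarrow> nat \<Rightarrow> nat \<Rightarrow> nat \<Rightarrow> 'k" where
  "word_coeff f a b c = f (tree3 LComb a b c) + f (tree3 RComb a b c) + f (tree3 Corolla a b c)"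

text \<open>Multilinear Lie elements of degree 3 in the free associative algebra; for instance
  [[x1,x2],x3] has u = e2 - e1.\<close>

definition lie3 :: "(nat \<Rightarrow> nat \<Rightarrow> nat \<Rightarrow> 'k::field) \<Rightarrow> bool" where
  "lie3 g \<longleftrightarrow> (\<exists>u. u 1 + u 2 + u 3 = 0 \<and> (\<forall>a b c. (a, b, c) \<in> words3 \<longrightarrow> g a b c = u b))"

lemma sum_indic_diagonal:
  fixes f :: "'k::field vec"
  assumes "finite T" "supp f \<subseteq> T"
  shows "(\<Sum>t\<in>T. f t * indic {(t, One)} p) = ten_one f p"
    and "(\<Sum>t\<in>T. f t * indic {(One, t)} p) = one_ten f p"
proof -
  obtain u v where p: "p = (u, v)" by fastforce
  have "f u = 0" if "u \<notin> T" for u using assms(2) that by (auto simp: supp_def)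
  moreover have
    "(\<Sum>t\<in>T. f t * indic {(t, One)} p) = (\<Sum>t\<in>T. if t = u then (if v = One then f t else 0) else 0)"
    "(\<Sum>t\<in>T. f t * indic {(One, t)} p) = (\<Sum>t\<in>T. if t = v then (if u = One then f t else 0) else 0)"
    unfolding p by (auto simp: indic_def intro!: sum.cong)
  ultimately show "(\<Sum>t\<in>T. f t * indic {(t, One)} p) = ten_one f p"
    and "(\<Sum>t\<in>T. f t * indic {(One, t)} p) = one_ten f p"
    using assms(1) by (auto simp: p ten_one_def one_ten_def)
qed

lemma Delta_eq_sum:
  "finite T \<Longrightarrow> supp f \<subseteq> T \<Longrightarrow> Delta f p = (\<Sum>t\<in>T. f t * delta t p)"
  unfolding Delta_def by (intro sum.mono_neutral_left) (auto simp: supp_def)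

lemma Delta_on_trees3:
  fixes f :: "'k::field vec"
  assumes "supp f \<subseteq> trees3"
  shows "Delta f = ten_one f + one_ten f
    + (\<lambda>p. \<Sum>(a, b, c)\<in>words3. word_coeff f a b c * indic (splittings a b c) p)"
proof
  fix p :: "mtree \<times> mtree"
  let ?diag = "\<lambda>t. indic {(t, One)} p + indic {(One, t)} p :: 'k"
  have inj: "inj_on (\<lambda>(s, a, b, c). tree3 s a b c) (UNIV \<times> words3)"
    by (auto simp: inj_on_def)
  have "Delta f p = (\<Sum>t\<in>trees3. f t * delta t p)"
    using assms by (simp add: Delta_eq_sum[of trees3])
  also have "\<dots> = (\<Sum>t\<in>trees3. f t * indic {(t, One)} p)
      + (\<Sum>t\<in>trees3. f t * indic {(One, t)} p) + (\<Sum>t\<in>trees3. f t * (delta t p - ?diag t))"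
    by (simp add: sum.distrib[symmetric] algebra_simps)
  also have "(\<Sum>t\<in>trees3. f t * (delta t p - ?diag t))
      = (\<Sum>(s, a, b, c)\<in>UNIV \<times> words3. f (tree3 s a b c) * indic (splittings a b c) p)"
  proof -
    have "delta (tree3 s a b c) p - ?diag (tree3 s a b c) = indic (splittings a b c) p"
      if "(a, b, c) \<in> words3" for s a b c
      using that by (auto simp: delta_tree3 words3_def indic_def splittings_def)
    then show ?thesis
      unfolding trees3_image sum.reindex[OF inj] by (auto intro!: sum.cong)
  qed
  also have "\<dots> =
      (\<Sum>s\<in>UNIV. \<Sum>(a, b, c)\<in>words3. f (tree3 s a b c) * indic (splittings a b c) p)"
    by (simp add: sum.cartesian_product)
  also have "\<dots> = (\<Sum>(a, b, c)\<in>words3. word_coeff f a b c * indic (splittings a b c) p)"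
    by (simp add: UNIV_shape3 word_coeff_def distrib_right sum.distrib split_def)
  finally show "Delta f p = (ten_one f + one_ten f
      + (\<lambda>p. \<Sum>(a, b, c)\<in>words3. word_coeff f a b c * indic (splittings a b c) p)) p"
    using sum_indic_diagonal[OF finite_trees3 assms] by simp
qed

lemma splitting_sums_vanish_iff_lie3:
  fixes g :: "nat \<Rightarrow> nat \<Rightarrow> nat \<Rightarrow> 'k::field"
  shows "(\<forall>p. (\<Sum>(a, b, c)\<in>words3. g a b c * indic (splittings a b c) p) = 0) \<longleftrightarrow> lie3 g"
proof
  assume vanish: "\<forall>p. (\<Sum>(a, b, c)\<in>words3. g a b c * indic (splittings a b c) p) = 0"
  have at: "(\<Sum>(a, b, c)\<in>words3. g a b c * indic (splittings a b c) (Leaf x, cherry y z)) = 0"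
    for x y z using vanish by blast
  have e1: "g 1 2 3 + g 2 1 3 + g 2 3 1 = 0" and e2: "g 1 3 2 + g 3 1 2 + g 3 2 1 = 0"
    and e3: "g 2 1 3 + g 1 2 3 + g 1 3 2 = 0" and e5: "g 3 1 2 + g 1 3 2 + g 1 2 3 = 0"
    using at[of 1 2 3] at[of 1 3 2] at[of 2 1 3] at[of 3 1 2]
    by (simp_all add: words3_eq splittings_def indic_def algebra_simps)
  have "g 2 3 1 = g 1 3 2" "g 3 1 2 = g 2 1 3" "g 3 2 1 = g 1 2 3"
    using e1 e2 e3 e5 by algebra+
  with e3 show "lie3 g"
    unfolding lie3_def
    by (intro exI[of _ "\<lambda>i. if i = 1 then g 2 1 3 else if i = 2 then g 1 2 3 else g 1 3 2"])
      (simp add: words3_eq)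
next
  assume "lie3 g"
  then obtain u where u3: "u 3 = - u 1 - u 2"
    and g: "\<forall>a b c. (a, b, c) \<in> words3 \<longrightarrow> g a b c = u b"
    unfolding lie3_def by (auto simp: eq_neg_iff_add_eq_0 algebra_simps)
  show "\<forall>p. (\<Sum>(a, b, c)\<in>words3. g a b c * indic (splittings a b c) p) = 0"
  proof
    fix p
    have "(\<Sum>(a, b, c)\<in>words3. g a b c * indic (splittings a b c) p)
        = (\<Sum>(a, b, c)\<in>words3. u b * indic (splittings a b c) p)"
      using g by (intro sum.cong) auto
    also have "\<dots> = 0"
    proof (cases "p \<in> (\<Union>(a, b, c)\<in>words3. splittings a b c)")
      case True
      then show ?thesis
        by (auto simp: words3_eq splittings_def indic_def u3)
    next
      case False
      then show ?thesis by (auto simp: indic_def intro!: sum.neutral)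
    qed
    finally show "(\<Sum>(a, b, c)\<in>words3. g a b c * indic (splittings a b c) p) = 0" .
  qed
qed

section \<open>Primitive elements of degree two and three\<close>

lemma Prim3_eq: "(Prim 3 :: 'k::field vec set) = {f. supp f \<subseteq> trees3 \<and> lie3 (word_coeff f)}"
proof -
  have "primitive f \<longleftrightarrow> lie3 (word_coeff f)" if "supp f \<subseteq> trees3" for f :: "'k vec"
  proof -
    have "primitive f \<longleftrightarrow>
        (\<lambda>p. \<Sum>(a, b, c)\<in>words3. word_coeff f a b c * indic (splittings a b c) p) = 0"
      unfolding primitive_def Delta_on_trees3[OF that] by simp
    then show ?thesis
      unfolding splitting_sums_vanish_iff_lie3[symmetric] by (simp only: fun_eq_iff zero_fun_def)
  qed
  moreover have
    "(\<forall>t\<in>supp f. proper t \<and> mset (leaves t) = mset [1..<Suc 3]) \<longleftrightarrow> supp f \<subseteq> trees3"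
    for f :: "'k vec"
    using multilinear3_iff_trees3 by blast
  ultimately show ?thesis
    unfolding Prim_def using finite_subset[OF _ finite_trees3] by blast
qed

lemma Prim2_eq: "(Prim 2 :: 'k::field vec set) = {sc c (bracket (X 1) (X 2)) | c. True}"
proof -
  let ?T = "{cherry 1 2, cherry 2 1}"
  have prim: "primitive f \<longleftrightarrow> f (cherry 2 1) = - f (cherry 1 2)"
    if supp: "supp f \<subseteq> ?T" for f :: "'k vec"
  proof -
    have zero: "f t = 0" if "t \<notin> ?T" for t using supp that by (auto simp: supp_def)
    have Delta: "Delta f p =
        f (cherry 1 2)
          * indic {(cherry 1 2, One), (Leaf 1, Leaf 2), (Leaf 2, Leaf 1), (One, cherry 1 2)} p
        + f (cherry 2 1)
          * indic {(cherry 2 1, One), (Leaf 2, Leaf 1), (Leaf 1, Leaf 2), (One, cherry 2 1)} p"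
      for p
      using supp Delta_eq_sum[of ?T f p] delta_cherry[of 1 2, where 'k = 'k]
        delta_cherry[of 2 1, where 'k = 'k]
      by (simp del: delta.simps)
    show ?thesis
    proof
      assume "primitive f"
      then have
        "Delta f (Leaf 1, Leaf 2) = ten_one f (Leaf 1, Leaf 2) + one_ten f (Leaf 1, Leaf 2)"
        unfolding primitive_def by simp
      then show "f (cherry 2 1) = - f (cherry 1 2)"
        by (simp add: Delta indic_def ten_one_def one_ten_def eq_neg_iff_add_eq_0 add.commute)
    next
      assume anti: "f (cherry 2 1) = - f (cherry 1 2)"
      show "primitive f"
        unfolding primitive_def
      proof
        fix p :: "mtree \<times> mtree"
        obtain u v where p: "p = (u, v)" by fastforce
        show "Delta f p = (ten_one f + one_ten f) p"
          using anti unfolding Delta p by (auto simp: indic_def ten_one_def one_ten_def zero)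
      qed
    qed
  qed
  have Prim2_iff: "f \<in> Prim 2 \<longleftrightarrow> supp f \<subseteq> ?T \<and> primitive f" for f :: "'k vec"
  proof -
    have "(\<forall>t\<in>supp f. proper t \<and> mset (leaves t) = mset [1..<Suc 2]) \<longleftrightarrow> supp f \<subseteq> ?T"
      using multilinear2_iff by blast
    moreover have "finite ?T" by simp
    ultimately show ?thesis unfolding Prim_def using finite_subset by blast
  qed
  show ?thesis
  proof (intro set_eqI iffI)
    fix f :: "'k vec"
    assume "f \<in> Prim 2"
    with Prim2_iff prim have supp: "supp f \<subseteq> ?T" and anti: "f (cherry 2 1) = - f (cherry 1 2)"
      by blast+
    have "f t = sc (f (cherry 1 2)) (bracket (X 1) (X 2)) t" for t
      using supp anti by (cases "t \<in> ?T") (auto simp: sc_def bracket_X indic_def supp_def)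
    then show "f \<in> {sc c (bracket (X 1) (X 2)) | c. True}" by blast
  next
    fix f :: "'k vec"
    assume "f \<in> {sc c (bracket (X 1) (X 2)) | c. True}"
    then obtain c where f: "f = sc c (bracket (X 1) (X 2))" by blast
    have "supp f \<subseteq> ?T" unfolding f by (auto simp: supp_def sc_def bracket_X indic_def)
    moreover have "f (cherry 2 1) = - f (cherry 1 2)"
      unfolding f by (simp add: sc_def bracket_X indic_def)
    ultimately show "f \<in> Prim 2" using Prim2_iff prim by blast
  qed
qed

interpretation vec_space: vector_space "sc :: 'k::field \<Rightarrow> 'k vec \<Rightarrow> 'k vec"
  by unfold_locales (auto simp: sc_def fun_eq_iff algebra_simps)

lemma (in vector_space) dim_span_biorthogonal:
  assumes "finite I"
    and add: "\<And>i x y. i \<in> I \<Longrightarrow> coord i (x + y) = coord i x + coord i y"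
    and scale: "\<And>i c x. i \<in> I \<Longrightarrow> coord i (c *s x) = c * coord i x"
    and dual: "\<And>i j. i \<in> I \<Longrightarrow> j \<in> I \<Longrightarrow> coord i (b j) = (if i = j then 1 else 0)"
  shows "dim (span (b ` I)) = card I"
proof -
  have inj: "inj_on b I"
  proof (rule inj_onI)
    fix i j assume "i \<in> I" "j \<in> I" "b i = b j"
    then have "coord i (b i) = coord i (b j)" by simp
    with \<open>i \<in> I\<close> \<open>j \<in> I\<close> dual show "i = j" by (auto split: if_splits)
  qed
  have coord_sum: "coord i (\<Sum>x\<in>A. c x *s x) = (\<Sum>x\<in>A. c x * coord i x)"
    if "i \<in> I" "finite A" for i A c
    using that(2)
  proof induction
    case empty
    show ?case using scale[OF that(1), of 0 0] by simp
  qed (simp add: add scale that(1))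
  have "independent (b ` I)"
  proof (rule independent_if_scalars_zero)
    show "finite (b ` I)" using assms(1) by simp
  next
    fix c x assume sum0: "(\<Sum>x\<in>b ` I. c x *s x) = 0" and "x \<in> b ` I"
    then obtain i where i: "i \<in> I" "x = b i" by blast
    have "0 = coord i (\<Sum>x\<in>b ` I. c x *s x)"
      using coord_sum[OF i(1), of "{}"] sum0 by simp
    also have "\<dots> = (\<Sum>x\<in>b ` I. c x * coord i x)"
      using coord_sum[OF i(1)] assms(1) by simp
    also have "\<dots> = (\<Sum>j\<in>I. c (b j) * coord i (b j))"
      by (simp add: sum.reindex[OF inj])
    also have "\<dots> = (\<Sum>j\<in>I. if i = j then c (b j) else 0)"
      using i(1) by (intro sum.cong) (auto simp: dual)
    also have "\<dots> = c (b i)"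
      using i(1) assms(1) by simp
    finally show "c x = 0" using i by simp
  qed
  then show ?thesis
    using dim_span_eq_card_independent card_image[OF inj] by simp
qed

lemma sum_fun_apply: "(\<Sum>i\<in>A. F i) x = (\<Sum>i\<in>A. F i x)"
  by (induction A rule: infinite_finite_induct) auto

lemma supp_add_subset: "supp (f + g) \<subseteq> supp f \<union> supp (g :: 'a \<Rightarrow> 'k::field)"
  by (auto simp: supp_def)

lemma supp_diff_subset: "supp (f - g) \<subseteq> supp f \<union> supp (g :: 'a \<Rightarrow> 'k::field)"
  by (auto simp: supp_def)

lemma supp_sc_subset: "supp (sc c f) \<subseteq> supp f"
  by (auto simp: supp_def sc_def)

lemma word_coeff_add:
  "word_coeff (f + g) = (\<lambda>a b c. word_coeff f a b c + word_coeff g a b c)"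
  by (simp add: word_coeff_def fun_eq_iff)

lemma word_coeff_sc: "word_coeff (sc r f) = (\<lambda>a b c. r * word_coeff f a b c)"
  by (simp add: word_coeff_def sc_def fun_eq_iff algebra_simps)

lemma lie3_add:
  assumes "lie3 g" "lie3 h"
  shows "lie3 (\<lambda>a b c. g a b c + h a b c)"
proof -
  obtain u v where "u 1 + u 2 + u 3 = 0" "\<forall>a b c. (a, b, c) \<in> words3 \<longrightarrow> g a b c = u b"
    "v 1 + v 2 + v 3 = 0" "\<forall>a b c. (a, b, c) \<in> words3 \<longrightarrow> h a b c = v b"
    using assms unfolding lie3_def by blast
  moreover have "(u 1 + v 1) + (u 2 + v 2) + (u 3 + v 3) = (u 1 + u 2 + u 3) + (v 1 + v 2 + v 3)"
    by (simp add: algebra_simps)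
  ultimately show ?thesis
    unfolding lie3_def by (intro exI[of _ "\<lambda>i. u i + v i"]) auto
qed

lemma lie3_scale:
  assumes "lie3 g"
  shows "lie3 (\<lambda>a b c. r * g a b c)"
proof -
  obtain u where "u 1 + u 2 + u 3 = 0" "\<forall>a b c. (a, b, c) \<in> words3 \<longrightarrow> g a b c = u b"
    using assms unfolding lie3_def by blast
  moreover have "r * u 1 + r * u 2 + r * u 3 = r * (u 1 + u 2 + u 3)"
    by (simp add: algebra_simps)
  ultimately show ?thesis
    unfolding lie3_def by (intro exI[of _ "\<lambda>i. r * u i"]) auto
qed

lemma lie3_permute:
  assumes "lie3 g" "\<tau> permutes {1, 2, 3}"
  shows "lie3 (\<lambda>a b c. g (\<tau> a) (\<tau> b) (\<tau> c))"
proof -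
  obtain u where u: "u 1 + u 2 + u 3 = 0" "\<forall>a b c. (a, b, c) \<in> words3 \<longrightarrow> g a b c = u b"
    using assms(1) unfolding lie3_def by blast
  have "u (\<tau> 1) + u (\<tau> 2) + u (\<tau> 3) = u 1 + u 2 + u 3"
    using sum.permute[OF assms(2), of u] by (simp add: add.assoc)
  moreover have "g (\<tau> a) (\<tau> b) (\<tau> c) = u (\<tau> b)" if "(a, b, c) \<in> words3" for a b c
    using u(2) words3_permute[OF assms(2)] that by simp
  ultimately show ?thesis
    using u(1) unfolding lie3_def by (intro exI[of _ "u \<circ> \<tau>"]) auto
qed

lemma subspace_Prim3: "vec_space.subspace (Prim 3 :: 'k::field vec set)"
proof -
  have "lie3 (\<lambda>a b c. 0 :: 'k)" unfolding lie3_def by (intro exI[of _ "\<lambda>i. 0"]) simp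
  moreover have "word_coeff (0 :: 'k vec) = (\<lambda>a b c. 0)"
    by (simp add: word_coeff_def fun_eq_iff)
  ultimately have "(0 :: 'k vec) \<in> Prim 3"
    by (simp add: Prim3_eq supp_def)
  moreover have "f + g \<in> Prim 3" if "f \<in> Prim 3" "g \<in> Prim 3" for f g :: "'k vec"
    using that supp_add_subset[of f g] lie3_add[of "word_coeff f" "word_coeff g"]
    by (auto simp: Prim3_eq word_coeff_add)
  moreover have "sc r f \<in> Prim 3" if "f \<in> Prim 3" for r and f :: "'k vec"
    using that supp_sc_subset[of r f] lie3_scale[of "word_coeff f" r]
    by (auto simp: Prim3_eq word_coeff_sc)
  ultimately show ?thesis
    unfolding vec_space.subspace_def by blast
qed

lemma relabel_trees3:
  assumes "\<sigma> permutes {1, 2, 3}"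
  shows "relabel \<sigma> t \<in> trees3 \<longleftrightarrow> t \<in> trees3"
proof -
  have fwd: "relabel \<tau> t \<in> trees3" if "\<tau> permutes {1, 2, 3}" "t \<in> trees3" for \<tau> t
    using that words3_permute[OF that(1)] by (auto simp: trees3_def)
  have "relabel (inv \<sigma>) (relabel \<sigma> t) = t"
    using permutes_inv_o(2)[OF assms] by (simp add: relabel_comp relabel_id)
  then show ?thesis using fwd[OF assms] fwd[OF permutes_inv[OF assms]] by metis
qed

lemma act_Prim3:
  assumes "\<sigma> permutes {1, 2, 3}" "f \<in> Prim 3"
  shows "act \<sigma> f \<in> (Prim 3 :: 'k::field vec set)"
proof -
  have "supp (act \<sigma> f) \<subseteq> trees3"
    using assms relabel_trees3[OF permutes_inv[OF assms(1)]]
    by (auto simp: Prim3_eq act_def supp_def)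
  moreover have "word_coeff (act \<sigma> f) = (\<lambda>a b c. word_coeff f (inv \<sigma> a) (inv \<sigma> b) (inv \<sigma> c))"
    by (simp add: word_coeff_def act_def fun_eq_iff)
  ultimately show ?thesis
    using assms lie3_permute[OF _ permutes_inv[OF assms(1)], of "word_coeff f"]
    by (simp add: Prim3_eq)
qed

definition tree_vec :: "(shape3 \<Rightarrow> nat \<Rightarrow> nat \<Rightarrow> nat \<Rightarrow> 'k::field) \<Rightarrow> 'k vec" where
  "tree_vec g t = (\<Sum>(s, a, b, c)\<in>UNIV \<times> words3. if t = tree3 s a b c then g s a b c else 0)"

lemma tree_vec_tree3 [simp]:
  assumes "(a, b, c) \<in> words3"
  shows "tree_vec g (tree3 s a b c) = g s a b c"
proof -
  have "tree_vec g (tree3 s a b c) = (\<Sum>x\<in>UNIV \<times> words3. if x = (s, a, b, c) then g s a b c else 0)"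
    unfolding tree_vec_def by (intro sum.cong) (auto split: if_split_asm)
  with assms show ?thesis by simp
qed

lemma tree_vec_outside: "t \<notin> trees3 \<Longrightarrow> tree_vec g t = 0"
  unfolding tree_vec_def trees3_def by (auto intro!: sum.neutral)

lemma supp_tree_vec: "supp (tree_vec g) \<subseteq> trees3"
  using tree_vec_outside by (auto simp: supp_def)

lemma trees3_coeff_ext:
  fixes f g :: "'k::field vec"
  assumes "supp f \<subseteq> trees3" "supp g \<subseteq> trees3"
    and "\<And>s a b c. (a, b, c) \<in> words3 \<Longrightarrow> f (tree3 s a b c) = g (tree3 s a b c)"
  shows "f = g"
proof
  fix t
  show "f t = g t"
  proof (cases "t \<in> trees3")
    case True
    with assms(3) show ?thesis by (auto simp: trees3_def)
  next
    case False
    with assms(1,2) have "f t = 0" "g t = 0" unfolding supp_def by blast+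
    then show ?thesis by simp
  qed
qed

lemma tree_vec_cong:
  "(\<And>s a b c. (a, b, c) \<in> words3 \<Longrightarrow> g s a b c = h s a b c) \<Longrightarrow> tree_vec g = tree_vec h"
  unfolding tree_vec_def by (auto intro!: sum.cong)

lemma tree_vec_add: "tree_vec (\<lambda>s a b c. g s a b c + h s a b c) = tree_vec g + tree_vec h"
  by (auto simp: tree_vec_def fun_eq_iff sum.distrib[symmetric] intro!: sum.cong)

lemma tree_vec_scale: "tree_vec (\<lambda>s a b c. r * g s a b c) = sc r (tree_vec g)"
  by (auto simp: tree_vec_def fun_eq_iff sc_def sum_distrib_left intro!: sum.cong)

lemma word_coeff_tree_vec:
  "(a, b, c) \<in> words3 \<Longrightarrow>
    word_coeff (tree_vec g) a b c = g LComb a b c + g RComb a b c + g Corolla a b c"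
  by (simp add: word_coeff_def)

lemma act_tree_vec:
  assumes "\<sigma> permutes {1, 2, 3}"
  shows "act \<sigma> (tree_vec g) = tree_vec (\<lambda>s a b c. g s (inv \<sigma> a) (inv \<sigma> b) (inv \<sigma> c))"
proof (rule trees3_coeff_ext)
  show "supp (act \<sigma> (tree_vec g)) \<subseteq> trees3"
    using supp_tree_vec relabel_trees3[OF permutes_inv[OF assms]] by (auto simp: act_def supp_def)
  show "act \<sigma> (tree_vec g) (tree3 s a b c) =
      tree_vec (\<lambda>s a b c. g s (inv \<sigma> a) (inv \<sigma> b) (inv \<sigma> c)) (tree3 s a b c)"
    if "(a, b, c) \<in> words3" for s a b c
    using that words3_permute[OF permutes_inv[OF assms]] by (simp add: act_def)
qed (rule supp_tree_vec)

definition lie_lift :: "(nat \<Rightarrow> 'k) \<Rightarrow> 'k::field vec" where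
  "lie_lift u = tree_vec (\<lambda>s a b c. if s = LComb then u b else 0)"

lemma lie_lift_Prim3:
  assumes "u 1 + u 2 + u 3 = 0"
  shows "lie_lift u \<in> Prim 3"
  using assms supp_tree_vec
  by (auto simp: Prim3_eq lie3_def lie_lift_def word_coeff_tree_vec intro!: exI[of _ u])

definition pivots3 :: "(shape3 \<times> nat \<times> nat \<times> nat) set" where
  "pivots3 = {(s, w). s \<noteq> LComb \<and> w \<in> words3} \<union> {(LComb, 1, 2, 3), (LComb, 1, 3, 2)}"

definition prim3_basis :: "shape3 \<times> nat \<times> nat \<times> nat \<Rightarrow> 'k::field vec" where
  "prim3_basis = (\<lambda>(s, a, b, c).
     if s = LComb then lie_lift (\<lambda>i. (if i = b then 1 else 0) - (if i = a then 1 else 0))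
     else basis_vec (tree3 LComb a b c) - basis_vec (tree3 s a b c))"

definition prim3_coord :: "shape3 \<times> nat \<times> nat \<times> nat \<Rightarrow> 'k::field vec \<Rightarrow> 'k" where
  "prim3_coord = (\<lambda>(s, a, b, c) f. if s = LComb then word_coeff f a b c else - f (tree3 s a b c))"

lemma pivots3_eq:
  "pivots3 = {(RComb, 1, 2, 3), (RComb, 1, 3, 2), (RComb, 2, 1, 3), (RComb, 2, 3, 1),
    (RComb, 3, 1, 2), (RComb, 3, 2, 1), (Corolla, 1, 2, 3), (Corolla, 1, 3, 2),
    (Corolla, 2, 1, 3), (Corolla, 2, 3, 1), (Corolla, 3, 1, 2), (Corolla, 3, 2, 1),
    (LComb, 1, 2, 3), (LComb, 1, 3, 2)}"
proof -
  have "s \<noteq> LComb \<longleftrightarrow> s = RComb \<or> s = Corolla" for s by (cases s) auto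
  then show ?thesis unfolding pivots3_def words3_eq by auto
qed

lemma card_pivots3: "card pivots3 = 14"
  by (simp add: pivots3_eq)

lemma word_coeff_shape_diff:
  "s \<noteq> LComb \<Longrightarrow>
    word_coeff (basis_vec (tree3 LComb a b c) - basis_vec (tree3 s a b c) :: 'k::field vec)
      = (\<lambda>a b c. 0)"
  by (cases s) (auto simp: word_coeff_def indic_def fun_eq_iff)

lemma word_coeff_lie_lift:
  "(a, b, c) \<in> words3 \<Longrightarrow> word_coeff (lie_lift u) a b c = u b"
  by (simp add: lie_lift_def word_coeff_tree_vec)

lemma prim3_basis_Prim3:
  assumes "i \<in> pivots3"
  shows "prim3_basis i \<in> (Prim 3 :: 'k::field vec set)"
proof -
  obtain s a b c where i: "i = (s, a, b, c)" by (cases i) auto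
  show ?thesis
  proof (cases "s = LComb")
    case True
    with assms i have "a = 1" "b = 2 \<or> b = 3" by (auto simp: pivots3_def)
    with True i show ?thesis by (auto simp: prim3_basis_def intro!: lie_lift_Prim3)
  next
    case False
    with assms i have w: "(a, b, c) \<in> words3" by (auto simp: pivots3_def)
    let ?f = "basis_vec (tree3 LComb a b c) - basis_vec (tree3 s a b c) :: 'k vec"
    have "supp ?f \<subseteq> trees3"
      using w supp_diff_subset[of "basis_vec (tree3 LComb a b c)" "basis_vec (tree3 s a b c)"]
      by (auto simp: trees3_def)
    moreover have "lie3 (word_coeff ?f)"
      unfolding word_coeff_shape_diff[OF False] lie3_def by (intro exI[of _ "\<lambda>i. 0"]) simp
    ultimately show ?thesis using False i by (simp add: prim3_basis_def Prim3_eq)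
  qed
qed

lemma prim3_coord_basis:
  assumes "i \<in> pivots3" "j \<in> pivots3"
  shows "prim3_coord i (prim3_basis j) = (if i = j then 1 else (0::'k::field))"
proof -
  obtain s a b c s' a' b' c' where i: "i = (s, a, b, c)" and j: "j = (s', a', b', c')"
    by (cases i, cases j) auto
  have w: "(a, b, c) \<in> words3" "(a', b', c') \<in> words3"
    using assms i j by (auto simp: pivots3_def words3_eq)
  show ?thesis
  proof (cases "s = LComb"; cases "s' = LComb")
    assume "s = LComb" "s' = LComb"
    with assms i j have "a = 1" "b = 2 \<or> b = 3" "c = 5 - b" "a' = 1" "b' = 2 \<or> b' = 3" "c' = 5 - b'"
      by (auto simp: pivots3_def)
    with \<open>s = LComb\<close> \<open>s' = LComb\<close> i j w show ?thesis
      by (auto simp: prim3_coord_def prim3_basis_def word_coeff_lie_lift)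
  next
    assume "s = LComb" "s' \<noteq> LComb"
    with i j show ?thesis by (simp add: prim3_coord_def prim3_basis_def word_coeff_shape_diff)
  next
    assume "s \<noteq> LComb" "s' = LComb"
    with i j w show ?thesis by (simp add: prim3_coord_def prim3_basis_def lie_lift_def)
  next
    assume "s \<noteq> LComb" "s' \<noteq> LComb"
    with i j show ?thesis by (auto simp: prim3_coord_def prim3_basis_def indic_def)
  qed
qed

lemma prim3_decomposition:
  fixes f :: "'k::field vec"
  assumes "f \<in> Prim 3"
  shows "f = (\<Sum>i\<in>pivots3. sc (prim3_coord i f) (prim3_basis i))"
proof (rule trees3_coeff_ext)
  show "supp f \<subseteq> trees3" using assms by (simp add: Prim3_eq)
  have "(\<Sum>i\<in>pivots3. sc (prim3_coord i f) (prim3_basis i)) \<in> Prim 3"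
    using prim3_basis_Prim3 subspace_Prim3
    by (intro vec_space.subspace_sum vec_space.subspace_scale) auto
  then show "supp (\<Sum>i\<in>pivots3. sc (prim3_coord i f) (prim3_basis i)) \<subseteq> trees3"
    by (simp add: Prim3_eq)
  obtain u where u3: "u 3 = - u 1 - u 2"
    and u: "\<And>a b c. (a, b, c) \<in> words3 \<Longrightarrow> word_coeff f a b c = u b"
    using assms by (auto simp: Prim3_eq lie3_def eq_neg_iff_add_eq_0 algebra_simps)
  have fL: "f (tree3 LComb a b c) = u b - f (tree3 RComb a b c) - f (tree3 Corolla a b c)"
    if "(a, b, c) \<in> words3" for a b c
    using u[OF that] by (simp add: word_coeff_def algebra_simps)
  fix s a b c
  assume "(a, b, c) \<in> words3"
  then have "(a, b, c) \<in> {(1,2,3), (1,3,2), (2,1,3), (2,3,1), (3,1,2), (3,2,1)}"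
    by (simp add: words3_eq)
  then show "f (tree3 s a b c) = (\<Sum>i\<in>pivots3. sc (prim3_coord i f) (prim3_basis i)) (tree3 s a b c)"
    unfolding sum_fun_apply pivots3_eq
    by (elim insertE emptyE; cases s)
      (simp_all add: prim3_coord_def prim3_basis_def sc_def lie_lift_def word_coeff_def indic_def
        fL words3_eq u3 algebra_simps)
qed

lemma Prim3_eq_span_basis: "(Prim 3 :: 'k::field vec set) = vec_space.span (prim3_basis ` pivots3)"
proof
  show "vec_space.span (prim3_basis ` pivots3) \<subseteq> (Prim 3 :: 'k vec set)"
    using prim3_basis_Prim3 by (intro vec_space.span_minimal subspace_Prim3) auto
  show "(Prim 3 :: 'k vec set) \<subseteq> vec_space.span (prim3_basis ` pivots3)"
  proof
    fix f :: "'k vec"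
    assume "f \<in> Prim 3"
    then have "f = (\<Sum>i\<in>pivots3. sc (prim3_coord i f) (prim3_basis i))"
      by (rule prim3_decomposition)
    also have "\<dots> \<in> vec_space.span (prim3_basis ` pivots3)"
      by (intro vec_space.span_sum vec_space.span_scale vec_space.span_base) auto
    finally show "f \<in> vec_space.span (prim3_basis ` pivots3)" .
  qed
qed

lemma dim_Prim3: "vec_space.dim (Prim 3 :: 'k::field vec set) = 14"
proof -
  have "vec_space.dim (vec_space.span (prim3_basis ` pivots3) :: 'k vec set) = card pivots3"
  proof (rule vec_space.dim_span_biorthogonal[where coord = prim3_coord])
    show "finite pivots3" by (simp add: pivots3_eq)
    show "prim3_coord i (f + g) = prim3_coord i f + prim3_coord i g" for i and f g :: "'k vec"
      by (simp add: prim3_coord_def word_coeff_def split: prod.split)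
    show "prim3_coord i (sc c f) = c * prim3_coord i f" for i c and f :: "'k vec"
      by (simp add: prim3_coord_def word_coeff_def sc_def algebra_simps split: prod.split)
  qed (rule prim3_coord_basis)
  then show ?thesis by (simp add: Prim3_eq_span_basis card_pivots3)
qed

section \<open>Generation by the orbits of the three generators\<close>

lemma words3_perm_exists:
  assumes "(a, b, c) \<in> words3"
  obtains \<sigma> where "\<sigma> permutes {1, 2, 3}" "\<sigma> 1 = a" "\<sigma> 2 = b" "\<sigma> 3 = c"
proof
  let ?\<sigma> = "\<lambda>i::nat. if i = 1 then a else if i = 2 then b else if i = 3 then c else i"
  have "bij_betw ?\<sigma> {1, 2, 3} {1, 2, 3}"
    using assms unfolding words3_def bij_betw_def inj_on_def by auto
  then show "?\<sigma> permutes {1, 2, 3}" by (rule bij_imp_permutes) auto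
qed simp_all

lemma bracket_bracket_X_Prim3: "bracket (bracket (X 1) (X 2)) (X 3) \<in> (Prim 3 :: 'k::field vec set)"
proof -
  let ?k = "bracket (bracket (X 1) (X 2)) (X 3) :: 'k vec"
  have "?k t = 0" if "t \<notin> trees3" for t
    using that by (auto simp: bracket_bracket_X indic_def words3_eq)
  then have "supp ?k \<subseteq> trees3" by (auto simp: supp_def)
  moreover have "lie3 (word_coeff ?k)"
    unfolding lie3_def
    by (intro exI[of _ "\<lambda>i. if i = 2 then 1 else if i = 1 then -1 else 0"])
      (auto simp: words3_eq word_coeff_def bracket_bracket_X indic_def)
  ultimately show ?thesis by (simp add: Prim3_eq)
qed

lemma assoc_X_eq_prim3_basis:
  "assoc_b (X 1) (X 2) (X 3) = (prim3_basis (RComb, 1, 2, 3) :: 'k::field vec)"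
  "assoc_t (X 1) (X 2) (X 3) = (prim3_basis (Corolla, 1, 2, 3) :: 'k::field vec)"
  by (simp_all add: assoc_b_X assoc_t_X prim3_basis_def)

lemma generators_Prim3:
  "{assoc_t (X 1) (X 2) (X 3), assoc_b (X 1) (X 2) (X 3), bracket (bracket (X 1) (X 2)) (X 3)}
    \<subseteq> (Prim 3 :: 'k::field vec set)"
  using prim3_basis_Prim3[of "(RComb, 1, 2, 3)"] prim3_basis_Prim3[of "(Corolla, 1, 2, 3)"]
    bracket_bracket_X_Prim3
  by (simp add: assoc_X_eq_prim3_basis pivots3_eq)

lemma prim3_basis_shape_orbit:
  assumes "s \<noteq> LComb" "(a, b, c) \<in> words3"
  obtains \<sigma> where "\<sigma> permutes {1, 2, 3}"
    "prim3_basis (s, a, b, c) = (act \<sigma> (assoc_b (X 1) (X 2) (X 3)) :: 'k::field vec)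
     \<or> prim3_basis (s, a, b, c) = (act \<sigma> (assoc_t (X 1) (X 2) (X 3)) :: 'k vec)"
proof -
  obtain \<sigma> where \<sigma>: "\<sigma> permutes {1, 2, 3}" "\<sigma> 1 = a" "\<sigma> 2 = b" "\<sigma> 3 = c"
    using words3_perm_exists[OF assms(2)] by blast
  have "bij \<sigma>" using \<sigma>(1) by (rule permutes_bij)
  with assms(1) \<sigma> have
    "prim3_basis (s, a, b, c) = (act \<sigma> (assoc_b (X 1) (X 2) (X 3)) :: 'k vec)
     \<or> prim3_basis (s, a, b, c) = (act \<sigma> (assoc_t (X 1) (X 2) (X 3)) :: 'k vec)"
    by (cases s) (simp_all add: prim3_basis_def assoc_b_X assoc_t_X act_basis_vec)
  with \<sigma>(1) show ?thesis by (rule that)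
qed

lemma prim3_basis_lie_via_generators:
  "prim3_basis (LComb, 1, 2, 3) = bracket (bracket (X 1) (X 2)) (X 3)
     + prim3_basis (RComb, 3, 2, 1) - (prim3_basis (RComb, 3, 1, 2) :: 'k::field vec)"
    (is "?L1 = ?R1")
  "prim3_basis (LComb, 1, 3, 2) =
     act (Transposition.transpose 2 3) (bracket (bracket (X 1) (X 2)) (X 3))
     + prim3_basis (RComb, 2, 3, 1) - (prim3_basis (RComb, 2, 1, 3) :: 'k::field vec)"
    (is "?L2 = ?R2")
proof -
  have \<tau>: "Transposition.transpose 2 3 permutes {1, 2, 3::nat}" by (rule permutes_swap_id) auto
  have k: "bracket (bracket (X 1) (X 2)) (X 3) \<in> (Prim 3 :: 'k vec set)"
    using generators_Prim3 by blast
  have b: "prim3_basis (s, a, b, c) \<in> (Prim 3 :: 'k vec set)"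
    if "(s, a, b, c) \<in> {(LComb, 1, 2, 3), (LComb, 1, 3, 2), (RComb, 3, 2, 1), (RComb, 3, 1, 2),
      (RComb, 2, 3, 1), (RComb, 2, 1, 3)}" for s a b c
    using that by (intro prim3_basis_Prim3) (auto simp: pivots3_eq)
  note sub = vec_space.subspace_diff[OF subspace_Prim3 vec_space.subspace_add[OF subspace_Prim3]]
  have "?L1 \<in> Prim 3" "?L2 \<in> Prim 3" by (simp_all add: b)
  moreover have "?R1 \<in> Prim 3" "?R2 \<in> Prim 3"
    using k act_Prim3[OF \<tau> k] by (simp_all add: sub b)
  ultimately have supp: "supp ?L1 \<subseteq> trees3" "supp ?L2 \<subseteq> trees3"
    "supp ?R1 \<subseteq> trees3" "supp ?R2 \<subseteq> trees3"
    by (simp_all add: Prim3_eq)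
  show "?L1 = ?R1"
  proof (rule trees3_coeff_ext[OF supp(1,3)])
    fix s a b c
    assume "(a, b, c) \<in> words3"
    then have "(a, b, c) \<in> {(1,2,3), (1,3,2), (2,1,3), (2,3,1), (3,1,2), (3,2,1)}"
      by (simp add: words3_eq)
    then show "?L1 (tree3 s a b c) = ?R1 (tree3 s a b c)"
      by (elim insertE emptyE; simp add: prim3_basis_def lie_lift_def bracket_bracket_X indic_def
          words3_eq)
  qed
  show "?L2 = ?R2"
  proof (rule trees3_coeff_ext[OF supp(2,4)])
    fix s a b c
    assume "(a, b, c) \<in> words3"
    then have "(a, b, c) \<in> {(1,2,3), (1,3,2), (2,1,3), (2,3,1), (3,1,2), (3,2,1)}"
      by (simp add: words3_eq)
    then show "?L2 (tree3 s a b c) = ?R2 (tree3 s a b c)"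
      by (elim insertE emptyE; simp add: prim3_basis_def lie_lift_def bracket_bracket_X indic_def
          words3_eq act_def Transposition.transpose_def)
  qed
qed

lemma Prim3_eq_span_orbits:
  "(Prim 3 :: 'k::field vec set) = vec_space.span
     {act \<sigma> g | \<sigma> g. \<sigma> permutes {1, 2, 3} \<and>
        g \<in> {assoc_t (X 1) (X 2) (X 3), assoc_b (X 1) (X 2) (X 3),
              bracket (bracket (X 1) (X 2)) (X 3)}}"
  (is "_ = vec_space.span ?O")
proof
  show "vec_space.span ?O \<subseteq> Prim 3"
    using generators_Prim3 act_Prim3 by (intro vec_space.span_minimal subspace_Prim3) blast
  have orbit: "act \<sigma> g \<in> vec_space.span ?O"
    if "\<sigma> permutes {1, 2, 3}"
      "g \<in> {assoc_t (X 1) (X 2) (X 3), assoc_b (X 1) (X 2) (X 3),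
             bracket (bracket (X 1) (X 2)) (X 3)}"
    for \<sigma> g
    using that by (intro vec_space.span_base) blast
  have shape: "prim3_basis (s, a, b, c) \<in> vec_space.span ?O"
    if sw: "s \<noteq> LComb" "(a, b, c) \<in> words3" for s a b c
  proof -
    obtain \<sigma> where \<sigma>: "\<sigma> permutes {1, 2, 3}"
      and orb: "prim3_basis (s, a, b, c) = (act \<sigma> (assoc_b (X 1) (X 2) (X 3)) :: 'k vec)
        \<or> prim3_basis (s, a, b, c) = (act \<sigma> (assoc_t (X 1) (X 2) (X 3)) :: 'k vec)"
      using prim3_basis_shape_orbit[OF sw] by blast
    from orb show ?thesis
    proof
      assume eq: "prim3_basis (s, a, b, c) = (act \<sigma> (assoc_b (X 1) (X 2) (X 3)) :: 'k vec)"
      show ?thesis unfolding eq by (rule orbit[OF \<sigma>]) simp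
    next
      assume eq: "prim3_basis (s, a, b, c) = (act \<sigma> (assoc_t (X 1) (X 2) (X 3)) :: 'k vec)"
      show ?thesis unfolding eq by (rule orbit[OF \<sigma>]) simp
    qed
  qed
  have "bracket (bracket (X 1) (X 2)) (X 3) \<in> vec_space.span ?O"
    using orbit[OF permutes_id, of "bracket (bracket (X 1) (X 2)) (X 3)"]
    by (simp add: act_def relabel_id)
  moreover have "act (Transposition.transpose 2 3) (bracket (bracket (X 1) (X 2)) (X 3))
      \<in> vec_space.span ?O"
    by (rule orbit) (auto intro: permutes_swap_id)
  ultimately have "prim3_basis (LComb, 1, 2, 3) \<in> vec_space.span ?O"
    "prim3_basis (LComb, 1, 3, 2) \<in> vec_space.span ?O"
    unfolding prim3_basis_lie_via_generators
    by (intro vec_space.span_add vec_space.span_diff shape; simp add: words3_eq)+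
  with shape have "prim3_basis ` pivots3 \<subseteq> vec_space.span ?O"
    by (auto simp: pivots3_def)
  then show "Prim 3 \<subseteq> vec_space.span ?O"
    unfolding Prim3_eq_span_basis by (intro vec_space.span_minimal vec_space.subspace_span)
qed

section \<open>The representation of Sigma_3 on Prim 3\<close>

definition word_sign :: "nat \<Rightarrow> nat \<Rightarrow> nat \<Rightarrow> int" where
  "word_sign a b c = (if (a, b, c) \<in> {(1, 2, 3), (2, 3, 1), (3, 1, 2)} then 1 else -1)"

lemma word_sign_transpose:
  assumes "x \<in> {1, 2, 3}" "y \<in> {1, 2, 3}" "x \<noteq> y" "(a, b, c) \<in> words3"
  shows "word_sign (Transposition.transpose x y a) (Transposition.transpose x y b)
      (Transposition.transpose x y c) = - word_sign a b c"
  using assms unfolding words3_eq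
  by (elim insertE emptyE; simp add: word_sign_def Transposition.transpose_def)

lemma word_sign_permute:
  assumes "\<sigma> permutes {1, 2, 3}" "(a, b, c) \<in> words3"
  shows "word_sign (\<sigma> a) (\<sigma> b) (\<sigma> c) = sign \<sigma> * word_sign a b c"
proof -
  have "finite {1, 2, 3::nat}" by simp
  from assms(1) this
  have "\<forall>a b c. (a, b, c) \<in> words3 \<longrightarrow> word_sign (\<sigma> a) (\<sigma> b) (\<sigma> c) = sign \<sigma> * word_sign a b c"
  proof (induction rule: permutes_induct)
    case id
    then show ?case by simp
  next
    case (swap x y p)
    have "permutation p" using swap.hyps(4) by (rule permutes_imp_permutation[rotated]) simp
    then have sign: "sign (Transposition.transpose x y \<circ> p) = - sign p"
      using swap.hyps(3) by (simp add: sign_compose permutation_swap_id sign_swap_id)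
    show ?case
      unfolding sign
      using swap words3_permute[OF swap.hyps(4)] word_sign_transpose[OF swap.hyps(1-3)]
      by simp
  qed
  with assms(2) show ?thesis by blast
qed

definition word_total :: "(nat \<Rightarrow> nat \<Rightarrow> nat \<Rightarrow> 'k) \<Rightarrow> 'k::field" where
  "word_total g = (\<Sum>(a, b, c)\<in>words3. g a b c)"

definition marginal :: "nat \<Rightarrow> (nat \<Rightarrow> nat \<Rightarrow> nat \<Rightarrow> 'k) \<Rightarrow> nat \<Rightarrow> 'k::field" where
  "marginal k g i = (\<Sum>(a, b, c)\<in>words3. if [a, b, c] ! k = i then g a b c else 0)"

text \<open>The isomorphism V(3) + V(2,1) + V(2,1) + V(1,1,1) \<rightarrow> K[Sigma_3], with K[Sigma_3] seen as
  functions on words; the two standard summands record the first and the last letter.\<close>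

definition regular_iso :: "(nat \<Rightarrow> 'k) \<Rightarrow> (nat \<Rightarrow> 'k) \<Rightarrow> (nat \<Rightarrow> 'k) \<Rightarrow> (nat \<Rightarrow> 'k)
    \<Rightarrow> nat \<Rightarrow> nat \<Rightarrow> nat \<Rightarrow> 'k::field" where
  "regular_iso t u v s a b c = t 0 + u a + v c + of_int (word_sign a b c) * s 0"

definition regular_triv :: "(nat \<Rightarrow> nat \<Rightarrow> nat \<Rightarrow> 'k) \<Rightarrow> nat \<Rightarrow> 'k::field" where
  "regular_triv g i = (if i = 0 then word_total g / 6 else 0)"

definition regular_sign :: "(nat \<Rightarrow> nat \<Rightarrow> nat \<Rightarrow> 'k) \<Rightarrow> nat \<Rightarrow> 'k::field" where
  "regular_sign g i =
    (if i = 0 then (\<Sum>(a, b, c)\<in>words3. of_int (word_sign a b c) * g a b c) / 6 else 0)"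

definition regular_first :: "(nat \<Rightarrow> nat \<Rightarrow> nat \<Rightarrow> 'k) \<Rightarrow> nat \<Rightarrow> 'k::field" where
  "regular_first g i =
    (if i \<in> {1, 2, 3} then (2 * marginal 0 g i + marginal 2 g i - word_total g) / 3 else 0)"

definition regular_last :: "(nat \<Rightarrow> nat \<Rightarrow> nat \<Rightarrow> 'k) \<Rightarrow> nat \<Rightarrow> 'k::field" where
  "regular_last g i =
    (if i \<in> {1, 2, 3} then (2 * marginal 2 g i + marginal 0 g i - word_total g) / 3 else 0)"

definition lie_coord :: "(nat \<Rightarrow> nat \<Rightarrow> nat \<Rightarrow> 'k) \<Rightarrow> nat \<Rightarrow> 'k::field" where
  "lie_coord g i = marginal 1 g i / 2"

lemma std_carrier_iff:
  "v \<in> fst V_std \<longleftrightarrow> (\<forall>i. i \<notin> {1, 2, 3} \<longrightarrow> v i = 0) \<and> v 3 = - v 1 - v 2"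
  by (auto simp: V_std_def eq_neg_iff_add_eq_0 algebra_simps)

lemma regular_iso_inverse:
  fixes g :: "nat \<Rightarrow> nat \<Rightarrow> nat \<Rightarrow> 'k::field_char_0"
  assumes "(a, b, c) \<in> words3"
  shows "regular_iso (regular_triv g) (regular_first g) (regular_last g) (regular_sign g) a b c
    = g a b c"
  using assms unfolding words3_eq
  by (elim insertE emptyE; simp add: regular_iso_def regular_triv_def regular_first_def
      regular_last_def regular_sign_def word_total_def marginal_def words3_eq word_sign_def;
      simp add: field_simps)

lemma regular_coords_iso:
  fixes t u v s :: "nat \<Rightarrow> 'k::field_char_0"
  assumes "t \<in> fst V_triv" "u \<in> fst V_std" "v \<in> fst V_std" "s \<in> fst V_sign"
  shows "regular_triv (regular_iso t u v s) = t" "regular_first (regular_iso t u v s) = u"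
    "regular_last (regular_iso t u v s) = v" "regular_sign (regular_iso t u v s) = s"
proof -
  have t: "\<And>i. i \<noteq> 0 \<Longrightarrow> t i = 0" and s: "\<And>i. i \<noteq> 0 \<Longrightarrow> s i = 0"
    using assms(1,4) by (auto simp: V_triv_def V_sign_def)
  have u: "\<And>i. i \<notin> {1, 2, 3} \<Longrightarrow> u i = 0" "u 3 = - u 1 - u 2"
    and v: "\<And>i. i \<notin> {1, 2, 3} \<Longrightarrow> v i = 0" "v 3 = - v 1 - v 2"
    using assms(2,3) by (auto simp: std_carrier_iff)
  have "regular_triv (regular_iso t u v s) i = t i" for i
    using t by (cases "i = 0") (simp_all add: regular_triv_def regular_iso_def word_total_def
        words3_eq word_sign_def u(2) v(2) field_simps)
  moreover have "regular_sign (regular_iso t u v s) i = s i" for i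
    using s by (cases "i = 0") (simp_all add: regular_sign_def regular_iso_def words3_eq
        word_sign_def u(2) v(2) field_simps)
  moreover have "regular_first (regular_iso t u v s) i = u i" for i
    using u by (cases "i \<in> {1, 2, 3}") (auto simp: regular_first_def regular_iso_def
        word_total_def marginal_def words3_eq word_sign_def v(2) field_simps)
  moreover have "regular_last (regular_iso t u v s) i = v i" for i
    using v by (cases "i \<in> {1, 2, 3}") (auto simp: regular_last_def regular_iso_def
        word_total_def marginal_def words3_eq word_sign_def u(2) field_simps)
  ultimately show "regular_triv (regular_iso t u v s) = t" "regular_first (regular_iso t u v s) = u"
    "regular_last (regular_iso t u v s) = v" "regular_sign (regular_iso t u v s) = s"
    by auto
qed

lemma regular_coords_carrier:
  fixes g :: "nat \<Rightarrow> nat \<Rightarrow> nat \<Rightarrow> 'k::field_char_0"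
  shows "regular_triv g \<in> fst V_triv" "regular_sign g \<in> fst V_sign"
    "regular_first g \<in> fst V_std" "regular_last g \<in> fst V_std"
  by (auto simp: V_triv_def V_sign_def std_carrier_iff regular_triv_def regular_sign_def
      regular_first_def regular_last_def marginal_def word_total_def words3_eq field_simps)

lemma regular_iso_permute:
  assumes "\<sigma> permutes {1, 2, 3}" "(a, b, c) \<in> words3"
  shows "regular_iso t (u \<circ> inv \<sigma>) (v \<circ> inv \<sigma>) (\<lambda>i. of_int (sign \<sigma>) * s i) a b c =
    regular_iso t u v s (inv \<sigma> a) (inv \<sigma> b) (inv \<sigma> c)"
proof -
  have "permutation \<sigma>" using assms(1) by (rule permutes_imp_permutation[rotated]) simp
  then have "word_sign (inv \<sigma> a) (inv \<sigma> b) (inv \<sigma> c) = sign \<sigma> * word_sign a b c"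
    using word_sign_permute[OF permutes_inv[OF assms(1)] assms(2)] by (simp add: sign_inverse)
  then show ?thesis by (simp add: regular_iso_def)
qed

lemma lie_coord_middle:
  fixes w :: "nat \<Rightarrow> 'k::field_char_0"
  assumes "w \<in> fst V_std"
  shows "lie_coord (\<lambda>a b c. w b) = w"
proof
  fix i
  show "lie_coord (\<lambda>a b c. w b) i = w i"
    using assms by (cases "i \<in> {1, 2, 3}")
      (auto simp: lie_coord_def marginal_def words3_eq std_carrier_iff)
qed

lemma lie_coord_lie3:
  fixes g :: "nat \<Rightarrow> nat \<Rightarrow> nat \<Rightarrow> 'k::field_char_0"
  assumes "lie3 g"
  shows "\<And>a b c. (a, b, c) \<in> words3 \<Longrightarrow> lie_coord g b = g a b c"
    and "lie_coord g \<in> fst V_std"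
proof -
  obtain u where u3: "u 3 = - u 1 - u 2" and g: "\<And>a b c. (a, b, c) \<in> words3 \<Longrightarrow> g a b c = u b"
    using assms by (auto simp: lie3_def eq_neg_iff_add_eq_0 algebra_simps)
  have "lie_coord g i = (if i \<in> {1, 2, 3} then u i else 0)" for i
    by (auto simp: lie_coord_def marginal_def words3_eq g)
  then show "\<And>a b c. (a, b, c) \<in> words3 \<Longrightarrow> lie_coord g b = g a b c"
    and "lie_coord g \<in> fst V_std"
    by (auto simp: g words3_def std_carrier_iff u3)
qed

definition sym3_rep :: "'k::field rep \<Rightarrow> bool" where
  "sym3_rep R \<longleftrightarrow> (\<forall>v\<in>fst R. \<forall>v'\<in>fst R. v + v' \<in> fst R) \<and> (\<forall>c. \<forall>v\<in>fst R. (\<lambda>i. c * v i) \<in> fst R)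
     \<and> (\<forall>\<sigma>. \<sigma> permutes {1, 2, 3} \<longrightarrow> (\<forall>v\<in>fst R. snd R \<sigma> v \<in> fst R))"

lemma sym3_rep_V_triv: "sym3_rep V_triv"
  by (simp add: sym3_rep_def V_triv_def)

lemma sym3_rep_V_sign: "sym3_rep V_sign"
  by (simp add: sym3_rep_def V_sign_def)

lemma sym3_rep_V_std: "sym3_rep V_std"
proof -
  have "v \<circ> inv \<sigma> \<in> fst V_std" if "\<sigma> permutes {1, 2, 3}" "v \<in> fst V_std" for \<sigma> v
  proof -
    have "inv \<sigma> permutes {1, 2, 3}" using that(1) by (rule permutes_inv)
    then have "inv \<sigma> i = i" if "i \<notin> {1, 2, 3}" for i using that by (rule permutes_not_in)
    moreover have "v (inv \<sigma> 1) + v (inv \<sigma> 2) + v (inv \<sigma> 3) = v 1 + v 2 + v 3"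
      using sum.permute[OF permutes_inv[OF that(1)], of v] by (simp add: add.assoc)
    ultimately show ?thesis using that(2) by (auto simp: V_std_def)
  qed
  then show ?thesis
    by (auto simp: sym3_rep_def V_std_def algebra_simps simp flip: distrib_left)
qed

lemma dsum_carrier_closed:
  assumes "\<forall>R\<in>set Rs. sym3_rep R" "w \<in> dsum_carrier Rs"
  shows "w' \<in> dsum_carrier Rs \<Longrightarrow> w + w' \<in> dsum_carrier Rs"
    and "(\<lambda>j i. c * w j i) \<in> dsum_carrier Rs"
    and "\<sigma> permutes {1, 2, 3} \<Longrightarrow> dsum_act Rs \<sigma> w \<in> dsum_carrier Rs"
  using assms by (auto simp: dsum_carrier_def dsum_act_def sym3_rep_def fun_eq_iff)

lemma sym3_isoI:
  fixes P :: "'k::field vec set" and Rs :: "'k rep list"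
  assumes reps: "\<forall>R\<in>set Rs. sym3_rep R"
    and synth_into: "\<And>w. w \<in> dsum_carrier Rs \<Longrightarrow> \<psi> w \<in> P"
    and analysis_into: "\<And>f. f \<in> P \<Longrightarrow> \<phi> f \<in> dsum_carrier Rs"
    and analysis_synth: "\<And>w. w \<in> dsum_carrier Rs \<Longrightarrow> \<phi> (\<psi> w) = w"
    and synth_analysis: "\<And>f. f \<in> P \<Longrightarrow> \<psi> (\<phi> f) = f"
    and add: "\<And>w w'. w \<in> dsum_carrier Rs \<Longrightarrow> w' \<in> dsum_carrier Rs \<Longrightarrow> \<psi> (w + w') = \<psi> w + \<psi> w'"
    and scale: "\<And>c w. w \<in> dsum_carrier Rs \<Longrightarrow> \<psi> (\<lambda>j i. c * w j i) = sc c (\<psi> w)"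
    and equivariant: "\<And>\<sigma> w. \<sigma> permutes {1, 2, 3} \<Longrightarrow> w \<in> dsum_carrier Rs \<Longrightarrow>
      act \<sigma> (\<psi> w) = \<psi> (dsum_act Rs \<sigma> w)"
  shows "sym3_iso P Rs"
  unfolding sym3_iso_def
proof (intro exI[of _ \<phi>] conjI ballI allI impI)
  fix f g assume f: "f \<in> P" and g: "g \<in> P"
  have "\<phi> (f + g) = \<phi> (\<psi> (\<phi> f + \<phi> g))"
    using f g by (simp add: add analysis_into synth_analysis)
  also have "\<dots> = \<phi> f + \<phi> g"
    using f g by (intro analysis_synth dsum_carrier_closed(1)[OF reps] analysis_into)
  finally show "\<phi> (f + g) = \<phi> f + \<phi> g" .
next
  fix c f assume f: "f \<in> P"
  have "\<phi> (sc c f) = \<phi> (\<psi> (\<lambda>j i. c * \<phi> f j i))"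
    using f by (simp add: scale analysis_into synth_analysis)
  also have "\<dots> = (\<lambda>j i. c * \<phi> f j i)"
    using f by (intro analysis_synth dsum_carrier_closed(2)[OF reps] analysis_into)
  finally show "\<phi> (sc c f) = (\<lambda>j i. c * \<phi> f j i)" .
next
  show "bij_betw \<phi> P (dsum_carrier Rs)"
  proof (rule bij_betw_byWitness[where f' = \<psi>])
  qed (use synth_into analysis_into analysis_synth synth_analysis in auto)
next
  fix \<sigma> :: "nat \<Rightarrow> nat" and f
  assume \<sigma>: "\<sigma> permutes {1, 2, 3}" and f: "f \<in> P"
  have "act \<sigma> f = \<psi> (dsum_act Rs \<sigma> (\<phi> f))"
    using equivariant[OF \<sigma> analysis_into[OF f]] synth_analysis[OF f] by simp
  then have "\<phi> (act \<sigma> f) = \<phi> (\<psi> (dsum_act Rs \<sigma> (\<phi> f)))" by simp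
  also have "\<dots> = dsum_act Rs \<sigma> (\<phi> f)"
    using f by (intro analysis_synth dsum_carrier_closed(3)[OF reps _ \<sigma>] analysis_into)
  finally show "\<phi> (act \<sigma> f) = dsum_act Rs \<sigma> (\<phi> f)" .
qed

abbreviation Prim3_reps :: "'k::field rep list" where
  "Prim3_reps \<equiv> [V_triv, V_triv, V_std, V_std, V_std, V_std, V_std, V_sign, V_sign]"

lemma Prim3_reps_carrier:
  fixes w :: "nat \<Rightarrow> nat \<Rightarrow> 'k::field"
  shows "w \<in> dsum_carrier Prim3_reps \<longleftrightarrow>
    w 0 \<in> fst V_triv \<and> w 1 \<in> fst V_triv \<and> w 2 \<in> fst V_std \<and> w 3 \<in> fst V_std \<and> w 4 \<in> fst V_std
    \<and> w 5 \<in> fst V_std \<and> w 6 \<in> fst V_std \<and> w 7 \<in> fst V_sign \<and> w 8 \<in> fst V_sign \<and> (\<forall>j\<ge>9. w j = 0)"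
proof -
  have len: "length (Prim3_reps :: 'k rep list) = 9" by simp
  have "(j::nat) < 9 \<longleftrightarrow> j \<in> {0, 1, 2, 3, 4, 5, 6, 7, 8}" for j by auto
  then show ?thesis unfolding dsum_carrier_def len by (simp add: all_conj_distrib)
qed

lemma Prim3_reps_act:
  fixes w :: "nat \<Rightarrow> nat \<Rightarrow> 'k::field"
  shows "dsum_act Prim3_reps \<sigma> w 0 = w 0" "dsum_act Prim3_reps \<sigma> w 1 = w 1"
    and "j \<in> {2, 3, 4, 5, 6} \<Longrightarrow> dsum_act Prim3_reps \<sigma> w j = w j \<circ> inv \<sigma>"
    and "j \<in> {7, 8} \<Longrightarrow> dsum_act Prim3_reps \<sigma> w j = (\<lambda>i. of_int (sign \<sigma>) * w j i)"
  by (auto simp: dsum_act_def V_triv_def V_std_def V_sign_def)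

text \<open>Prim 3 is the sum of two copies of K[Sigma_3], read off from the coefficients of
  (a(bc)) and (abc), and of the Lie part, which fixes the coefficients of ((ab)c).\<close>

definition prim3_synth :: "(nat \<Rightarrow> nat \<Rightarrow> 'k::field) \<Rightarrow> 'k vec" where
  "prim3_synth w = tree_vec (\<lambda>s a b c. case s of
      LComb \<Rightarrow>
        regular_iso (w 0) (w 2) (w 3) (w 7) a b c + regular_iso (w 1) (w 4) (w 5) (w 8) a b c
        + w 6 b
    | RComb \<Rightarrow> - regular_iso (w 0) (w 2) (w 3) (w 7) a b c
    | Corolla \<Rightarrow> - regular_iso (w 1) (w 4) (w 5) (w 8) a b c)"

definition prim3_analysis :: "'k::field_char_0 vec \<Rightarrow> nat \<Rightarrow> nat \<Rightarrow> 'k" where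
  "prim3_analysis f j =
    (let r = (\<lambda>a b c. - f (tree3 RComb a b c)); k = (\<lambda>a b c. - f (tree3 Corolla a b c))
     in if j < 9
        then [regular_triv r, regular_triv k, regular_first r, regular_last r, regular_first k,
          regular_last k, lie_coord (word_coeff f), regular_sign r, regular_sign k] ! j
        else 0)"

lemma prim3_synth_Prim3:
  assumes "w \<in> dsum_carrier Prim3_reps"
  shows "prim3_synth w \<in> (Prim 3 :: 'k::field vec set)"
proof -
  have "w 6 \<in> fst V_std" using assms by (simp add: Prim3_reps_carrier)
  then have "lie3 (word_coeff (prim3_synth w))"
    unfolding lie3_def prim3_synth_def
    by (intro exI[of _ "w 6"]) (auto simp: word_coeff_tree_vec V_std_def)
  then show ?thesis by (simp add: Prim3_eq prim3_synth_def supp_tree_vec)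
qed

lemma word_coords_cong:
  assumes "\<And>a b c. (a, b, c) \<in> words3 \<Longrightarrow> g a b c = h a b c"
  shows "regular_triv g = regular_triv h" "regular_sign g = regular_sign h"
    "regular_first g = regular_first h" "regular_last g = regular_last h"
    "lie_coord g = lie_coord h"
proof -
  have "word_total g = word_total h" "marginal k g = marginal k h" for k
    using assms by (auto simp: word_total_def marginal_def fun_eq_iff intro!: sum.cong)
  moreover have "(\<Sum>(a, b, c)\<in>words3. of_int (word_sign a b c) * g a b c)
      = (\<Sum>(a, b, c)\<in>words3. of_int (word_sign a b c) * h a b c)"
    using assms by (auto intro!: sum.cong)
  ultimately show "regular_triv g = regular_triv h" "regular_sign g = regular_sign h"
    "regular_first g = regular_first h" "regular_last g = regular_last h"
    "lie_coord g = lie_coord h"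
    by (simp_all add: regular_triv_def regular_sign_def regular_first_def regular_last_def
        lie_coord_def fun_eq_iff)
qed

lemma prim3_analysis_carrier:
  fixes f :: "'k::field_char_0 vec"
  assumes "f \<in> Prim 3"
  shows "prim3_analysis f \<in> dsum_carrier Prim3_reps"
  using assms regular_coords_carrier[where 'k = 'k] lie_coord_lie3(2)[where 'k = 'k]
  by (simp add: Prim3_reps_carrier prim3_analysis_def Prim3_eq)

lemma prim3_analysis_synth:
  fixes w :: "nat \<Rightarrow> nat \<Rightarrow> 'k::field_char_0"
  assumes "w \<in> dsum_carrier Prim3_reps"
  shows "prim3_analysis (prim3_synth w) = w"
proof -
  let ?r = "\<lambda>a b c. - prim3_synth w (tree3 RComb a b c)"
  let ?k = "\<lambda>a b c. - prim3_synth w (tree3 Corolla a b c)"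
  have r: "?r a b c = regular_iso (w 0) (w 2) (w 3) (w 7) a b c"
    and k: "?k a b c = regular_iso (w 1) (w 4) (w 5) (w 8) a b c"
    and l: "word_coeff (prim3_synth w) a b c = w 6 b"
    if "(a, b, c) \<in> words3" for a b c
    using that by (simp_all add: prim3_synth_def word_coeff_tree_vec)
  have c: "w 0 \<in> fst V_triv" "w 1 \<in> fst V_triv" "w 2 \<in> fst V_std" "w 3 \<in> fst V_std"
    "w 4 \<in> fst V_std" "w 5 \<in> fst V_std" "w 6 \<in> fst V_std" "w 7 \<in> fst V_sign" "w 8 \<in> fst V_sign"
    "\<And>j. 9 \<le> j \<Longrightarrow> w j = 0"
    using assms by (simp_all add: Prim3_reps_carrier)
  show ?thesis
  proof
    fix j :: nat
    have "j < 9 \<Longrightarrow> j \<in> {0, 1, 2, 3, 4, 5, 6, 7, 8}" by auto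
    then show "prim3_analysis (prim3_synth w) j = w j"
      using word_coords_cong[OF r] word_coords_cong[OF k] word_coords_cong[OF l]
        regular_coords_iso[OF c(1,3,4,8)] regular_coords_iso[OF c(2,5,6,9)]
        lie_coord_middle[OF c(7)] c(10)
      by (cases "j < 9") (auto simp: prim3_analysis_def Let_def)
  qed
qed

lemma prim3_synth_analysis:
  fixes f :: "'k::field_char_0 vec"
  assumes "f \<in> Prim 3"
  shows "prim3_synth (prim3_analysis f) = f"
proof (rule trees3_coeff_ext)
  show "supp (prim3_synth (prim3_analysis f)) \<subseteq> trees3"
    by (simp add: prim3_synth_def supp_tree_vec)
  show "supp f \<subseteq> trees3" using assms by (simp add: Prim3_eq)
  fix s a b c
  assume w: "(a, b, c) \<in> words3"
  have "lie3 (word_coeff f)" using assms by (simp add: Prim3_eq)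
  from lie_coord_lie3(1)[OF this w] w
  show "prim3_synth (prim3_analysis f) (tree3 s a b c) = f (tree3 s a b c)"
    by (cases s)
      (simp_all add: prim3_synth_def prim3_analysis_def regular_iso_inverse word_coeff_def)
qed

lemma prim3_synth_add: "prim3_synth (w + w') = prim3_synth w + (prim3_synth w' :: 'k::field vec)"
  unfolding prim3_synth_def tree_vec_add[symmetric]
  by (rule tree_vec_cong) (auto simp: regular_iso_def algebra_simps split: shape3.split)

lemma prim3_synth_scale: "prim3_synth (\<lambda>j i. r * w j i) = sc r (prim3_synth w :: 'k::field vec)"
  unfolding prim3_synth_def tree_vec_scale[symmetric]
  by (rule tree_vec_cong) (auto simp: regular_iso_def algebra_simps split: shape3.split)

lemma prim3_synth_equivariant:
  assumes "\<sigma> permutes {1, 2, 3}"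
  shows "act \<sigma> (prim3_synth w) = prim3_synth (dsum_act Prim3_reps \<sigma> w :: nat \<Rightarrow> nat \<Rightarrow> 'k::field)"
  unfolding prim3_synth_def act_tree_vec[OF assms]
  by (rule tree_vec_cong)
    (auto simp: Prim3_reps_act regular_iso_permute[OF assms] split: shape3.split)

lemma Prim3_iso: "sym3_iso (Prim 3 :: 'k::field_char_0 vec set) Prim3_reps"
proof (rule sym3_isoI[where \<psi> = prim3_synth and \<phi> = prim3_analysis])
  show "\<forall>R\<in>set Prim3_reps. sym3_rep (R :: 'k rep)"
    using sym3_rep_V_triv sym3_rep_V_std sym3_rep_V_sign by auto
qed (simp_all add: prim3_synth_Prim3 prim3_analysis_carrier prim3_analysis_synth
    prim3_synth_analysis prim3_synth_add prim3_synth_scale prim3_synth_equivariant)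

theorem proposition4p5p5:
  fixes K :: "'k::field_char_0 itself"
  shows "(Prim 2 :: 'k vec set) = {sc c (bracket (X 1) (X 2)) | c. True}
    \<and> Vector_Spaces.vector_space.dim (sc :: 'k \<Rightarrow> 'k vec \<Rightarrow> 'k vec) (Prim 3) = 14
    \<and> (Prim 3 :: 'k vec set) = Modules.module.span (sc :: 'k \<Rightarrow> 'k vec \<Rightarrow> 'k vec)
           {act \<sigma> g | \<sigma> g. \<sigma> permutes {1,2,3} \<and>
              g \<in> {assoc_t (X 1) (X 2) (X 3), assoc_b (X 1) (X 2) (X 3),
                   bracket (bracket (X 1) (X 2)) (X 3)}}
    \<and> (bracket (bracket (X 2) (X 1)) (X 3) :: 'k vec) = - bracket (bracket (X 1) (X 2)) (X 3)
    \<and> (bracket (bracket (X 1) (X 2)) (X 3) + bracket (bracket (X 3) (X 1)) (X 2)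
           + bracket (bracket (X 2) (X 3)) (X 1) :: 'k vec)
         = assoc_b (X 1) (X 2) (X 3) - assoc_b (X 2) (X 1) (X 3) + assoc_b (X 3) (X 1) (X 2)
           - assoc_b (X 1) (X 3) (X 2) + assoc_b (X 2) (X 3) (X 1) - assoc_b (X 3) (X 2) (X 1)
    \<and> sym3_iso (Prim 3 :: 'k vec set)
           [V_triv, V_triv, V_std, V_std, V_std, V_std, V_std, V_sign, V_sign]"
  using Prim2_eq dim_Prim3 Prim3_eq_span_orbits bracket_bracket_X_antisym nonassociative_jacobi
    Prim3_iso
  by blast

end
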